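(* Let $U^\star\in\mathbb R^{d\times r}$ have pairwise orthogonal nonzero columns, with smallest singular value $\sigma_r$. Let $r_1\in\{0,\dots,r\}$, $\Lambda=\mathrm{diag}(I_{r_1},-I_{r-r_1})$, $U\in\mathbb R^{d\times r}$, and let $Q\in\mathcal Q_{r_1}$ attain $\inf_{Q\in\mathcal Q_{r_1}}\|U-U^\star Q\|_F$. Then $$\langle U-U^\star Q,\ U(U^{\mathrm T}U-\Lambda U^{\mathrm T}U\Lambda)\rangle\ge\tfrac18\|U^{\mathrm T}U-\Lambda U^{\mathrm T}U\Lambda\|_F^2-\tfrac12\Pi^4(U,U^\star),$$ $$\|U^{\mathrm T}U-\Lambda U^{\mathrm T}U\Lambda\|_F^2\ge8(\sqrt2-1)\sigma_r^2\Pi^2(U,U^\star)-4\|U\Lambda U^{\mathrm T}-U^\star\Lambda U^{\star\mathrm T}\|_F^2,$$ and consequently $$\langle U-U^\star Q,\ U(U^{\mathrm T}U-\Lambda U^{\mathrm T}U\Lambda)\rangle\ge(\sqrt2-1)\sigma_r^2\Pi^2(U,U^\star)-\tfrac12\|U\Lambda U^{\mathrm T}-U^\star\Lambda U^{\star\mathrm T}\|_F^2-\tfrac12\Pi^4(U,U^\star).$$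
   Context: $\mathbb Q^{m\times m}$ denotes orthogonal $m\times m$ matrices; $\mathcal Q_{r_1}=\{\mathrm{diag}(Q_1,Q_2):Q_1\in\mathbb Q^{r_1\times r_1},Q_2\in\mathbb Q^{(r-r_1)\times(r-r_1)}\}$; $\Pi(U_1,U_2)=\inf_{Q\in\mathcal Q_{r_1}}\|U_1-U_2Q\|_F$; $\langle A,B\rangle=\mathrm{tr}(A^{\mathrm T}B)$; $\|\cdot\|_F$ the Frobenius norm. *)

theory Defs
  imports "Jordan_Normal_Form.Matrix" "Jordan_Normal_Form.Char_Poly"
begin

definition frob_inner :: "real mat \<Rightarrow> real mat \<Rightarrow> real" where
  "frob_inner A B = (\<Sum>i<dim_row A. \<Sum>j<dim_col A. A $$ (i,j) * B $$ (i,j))"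

definition frob_norm :: "real mat \<Rightarrow> real" where
  "frob_norm A = sqrt (\<Sum>i<dim_row A. \<Sum>j<dim_col A. (A $$ (i,j))^2)"

definition orth_mats :: "nat \<Rightarrow> real mat set" where
  "orth_mats m = {Q. Q \<in> carrier_mat m m \<and> transpose_mat Q * Q = 1\<^sub>m m}"

definition Qblock :: "nat \<Rightarrow> nat \<Rightarrow> real mat set" where
  "Qblock r r1 = {four_block_mat Q1 (0\<^sub>m r1 (r - r1)) (0\<^sub>m (r - r1) r1) Q2 | Q1 Q2.
                   Q1 \<in> orth_mats r1 \<and> Q2 \<in> orth_mats (r - r1)}"

definition Lam :: "nat \<Rightarrow> nat \<Rightarrow> real mat" where
  "Lam r r1 = four_block_mat (1\<^sub>m r1) (0\<^sub>m r1 (r - r1)) (0\<^sub>m (r - r1) r1) (- 1\<^sub>m (r - r1))"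

definition Pi_dist :: "nat \<Rightarrow> real mat \<Rightarrow> real mat \<Rightarrow> real" where
  "Pi_dist r1 U1 U2 = (INF Q\<in>Qblock (dim_col U2) r1. frob_norm (U1 - U2 * Q))"

definition smallest_singular_value :: "real mat \<Rightarrow> real" where
  "smallest_singular_value A = sqrt (Min {k. eigenvalue (transpose_mat A * A) k})"

end

theory Submission
  imports Defs "HOL-Analysis.Convex"
begin

text \<open>
  Put \<open>Y = U\<^sup>\<star>Q\<close> and \<open>\<Delta> = U - Y\<close>. Minimality of \<open>Q\<close> says that \<open>P = Y\<^sup>TU\<close> maximises
  \<open>\<langle>P, R\<rangle>\<close> over the block-orthogonal group; testing this against Householder reflections and
  small rotations inside one block shows that \<open>P\<close> is symmetric on the diagonal blocks and positive
  semidefinite on vectors supported in one block. Since \<open>Y\<^sup>TY\<close> is block diagonal, the matrix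
  \<open>M = U\<^sup>TU - \<Lambda>U\<^sup>TU\<Lambda>\<close> only sees the off-diagonal blocks of \<open>Y\<^sup>T\<Delta> + \<Delta>\<^sup>TY + \<Delta>\<^sup>T\<Delta>\<close>, whence
  \<open>\<langle>\<Delta>, UM\<rangle> = \<parallel>M\<parallel>\<^sup>2/4 + \<langle>\<Delta>\<^sup>T\<Delta>, M\<rangle>/2\<close> and the first inequality.
  For the second, \<open>U\<Lambda>U\<^sup>T - Y\<Lambda>Y\<^sup>T = E\<^sub>1 - E\<^sub>2\<close> splits along the two blocks, the cross term
  is controlled by \<open>\<parallel>M\<parallel>\<^sup>2 = 8\<langle>U\<^sub>1U\<^sub>1\<^sup>T, U\<^sub>2U\<^sub>2\<^sup>T\<rangle>\<close>, and each \<open>\<parallel>E\<^sub>k\<parallel>\<^sup>2\<close> is bounded below by the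
  Procrustes-flow inequality of Tu et al., whose hypotheses are exactly the block symmetry and
  positivity of \<open>P\<close>.
\<close>

section \<open>The Frobenius inner product\<close>

lemma index_mult_mat_sum [simp]:
  "i < dim_row A \<Longrightarrow> j < dim_col B \<Longrightarrow> dim_col A = dim_row B \<Longrightarrow>
   (A * B) $$ (i,j) = (\<Sum>l<dim_row B. A $$ (i,l) * B $$ (l,j))"
  by (auto simp: scalar_prod_def atLeast0LessThan intro!: sum.cong)

declare index_mult_mat(1) [simp del]
declare minus_carrier_mat [simp]

lemma sum_rotate3:
  "(\<Sum>i\<in>A. \<Sum>j\<in>B. \<Sum>k\<in>C. g i j k) = (\<Sum>k\<in>C. \<Sum>i\<in>A. \<Sum>j\<in>B. (g i j k :: 'a :: comm_monoid_add))"
proof -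
  have "(\<Sum>i\<in>A. \<Sum>j\<in>B. \<Sum>k\<in>C. g i j k) = (\<Sum>i\<in>A. \<Sum>k\<in>C. \<Sum>j\<in>B. g i j k)"
    by (rule sum.cong, simp, rule sum.swap)
  also have "\<dots> = (\<Sum>k\<in>C. \<Sum>i\<in>A. \<Sum>j\<in>B. g i j k)" by (rule sum.swap)
  finally show ?thesis .
qed

lemma frob_norm_sq: "(frob_norm A)^2 = frob_inner A A"
  unfolding frob_norm_def frob_inner_def
  by (subst real_sqrt_pow2) (auto intro!: sum_nonneg simp: power2_eq_square)

lemma frob_norm_nonneg: "frob_norm A \<ge> 0"
  unfolding frob_norm_def by (auto intro!: sum_nonneg)

lemma frob_inner_self_nonneg: "frob_inner A A \<ge> 0"
  unfolding frob_inner_def by (auto intro!: sum_nonneg)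

lemma frob_inner_self_eq_0:
  "(\<And>i j. i < dim_row A \<Longrightarrow> j < dim_col A \<Longrightarrow> A $$ (i,j) = 0) \<Longrightarrow> frob_inner A A = 0"
  unfolding frob_inner_def by simp

lemma frob_inner_commute:
  "A \<in> carrier_mat n m \<Longrightarrow> B \<in> carrier_mat n m \<Longrightarrow> frob_inner A B = frob_inner B A"
  unfolding frob_inner_def by (auto simp: mult.commute)

lemma frob_inner_transpose:
  "A \<in> carrier_mat n m \<Longrightarrow> B \<in> carrier_mat n m \<Longrightarrow>
   frob_inner (transpose_mat A) (transpose_mat B) = frob_inner A B"
  unfolding frob_inner_def by (auto intro: sum.swap)

lemma frob_inner_add_left:
  "A \<in> carrier_mat n m \<Longrightarrow> B \<in> carrier_mat n m \<Longrightarrow> C \<in> carrier_mat n m \<Longrightarrow>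
   frob_inner (B + C) A = frob_inner B A + frob_inner C A"
  unfolding frob_inner_def by (auto simp: algebra_simps sum.distrib)

lemma frob_inner_add_right:
  "A \<in> carrier_mat n m \<Longrightarrow> B \<in> carrier_mat n m \<Longrightarrow> C \<in> carrier_mat n m \<Longrightarrow>
   frob_inner A (B + C) = frob_inner A B + frob_inner A C"
  unfolding frob_inner_def by (auto simp: algebra_simps sum.distrib)

lemma frob_inner_diff_left:
  "A \<in> carrier_mat n m \<Longrightarrow> B \<in> carrier_mat n m \<Longrightarrow> C \<in> carrier_mat n m \<Longrightarrow>
   frob_inner (B - C) A = frob_inner B A - frob_inner C A"
  unfolding frob_inner_def by (auto simp: algebra_simps sum_subtractf)

lemma frob_inner_diff_right:
  "A \<in> carrier_mat n m \<Longrightarrow> B \<in> carrier_mat n m \<Longrightarrow> C \<in> carrier_mat n m \<Longrightarrow>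
   frob_inner A (B - C) = frob_inner A B - frob_inner A C"
  unfolding frob_inner_def by (auto simp: algebra_simps sum_subtractf)

lemma frob_inner_smult_left:
  "A \<in> carrier_mat n m \<Longrightarrow> B \<in> carrier_mat n m \<Longrightarrow> frob_inner (c \<cdot>\<^sub>m B) A = c * frob_inner B A"
  unfolding frob_inner_def by (auto simp: algebra_simps sum_distrib_left)

lemma frob_inner_smult_right:
  "A \<in> carrier_mat n m \<Longrightarrow> B \<in> carrier_mat n m \<Longrightarrow> frob_inner A (c \<cdot>\<^sub>m B) = c * frob_inner A B"
  unfolding frob_inner_def by (auto simp: algebra_simps sum_distrib_left)

lemma frob_inner_one_right:
  "P \<in> carrier_mat r r \<Longrightarrow> frob_inner P (1\<^sub>m r) = (\<Sum>a<r. P $$ (a,a))"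
  unfolding frob_inner_def by (simp add: if_distrib sum.delta cong: if_cong)

lemma frob_inner_mult_right_transpose_left:
  assumes A: "A \<in> carrier_mat n m" and B: "B \<in> carrier_mat n k" and C: "C \<in> carrier_mat k m"
  shows "frob_inner A (B * C) = frob_inner (transpose_mat B * A) C"
proof -
  have "frob_inner A (B * C) = (\<Sum>i<n. \<Sum>j<m. \<Sum>l<k. A $$ (i,j) * B $$ (i,l) * C $$ (l,j))"
    unfolding frob_inner_def using A B C by (simp add: sum_distrib_left mult.assoc)
  also have "\<dots> = (\<Sum>l<k. \<Sum>i<n. \<Sum>j<m. A $$ (i,j) * B $$ (i,l) * C $$ (l,j))"
    by (rule sum_rotate3)
  also have "\<dots> = (\<Sum>l<k. \<Sum>j<m. \<Sum>i<n. A $$ (i,j) * B $$ (i,l) * C $$ (l,j))"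
    by (rule sum.cong, simp, rule sum.swap)
  also have "\<dots> = frob_inner (transpose_mat B * A) C"
    unfolding frob_inner_def using A B C by (simp add: sum_distrib_left mult_ac)
  finally show ?thesis .
qed

lemma frob_inner_mult_right_transpose_right:
  assumes A: "A \<in> carrier_mat n m" and B: "B \<in> carrier_mat n k" and C: "C \<in> carrier_mat k m"
  shows "frob_inner A (B * C) = frob_inner (A * transpose_mat C) B"
proof -
  have "frob_inner A (B * C) = frob_inner (transpose_mat A) (transpose_mat C * transpose_mat B)"
    using A B C by (simp add: frob_inner_transpose[symmetric, of _ n m] transpose_mult)
  also have "\<dots> = frob_inner (C * transpose_mat A) (transpose_mat B)"
    using A B C by (simp add: frob_inner_mult_right_transpose_left[of _ m n _ k])
  also have "\<dots> = frob_inner (A * transpose_mat C) B"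
    using A B C by (simp add: frob_inner_transpose[symmetric, of _ n k] transpose_mult)
  finally show ?thesis .
qed

lemma frob_inner_abs_le:
  assumes "A \<in> carrier_mat n m" "B \<in> carrier_mat n m"
  shows "\<bar>frob_inner A B\<bar> \<le> frob_norm A * frob_norm B"
proof -
  let ?I = "{..<n} \<times> {..<m}"
  have inner: "frob_inner A B = (\<Sum>p\<in>?I. A $$ p * B $$ p)"
    using assms unfolding frob_inner_def by (simp add: sum.cartesian_product)
  have norm: "frob_norm C = sqrt (\<Sum>p\<in>?I. (C $$ p)^2)" if "C \<in> carrier_mat n m" for C
    using that unfolding frob_norm_def by (simp add: sum.cartesian_product)
  have "\<bar>\<Sum>p\<in>?I. A $$ p * B $$ p\<bar> \<le> sqrt ((\<Sum>p\<in>?I. (A $$ p)^2) * (\<Sum>p\<in>?I. (B $$ p)^2))"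
    using real_sqrt_le_mono[OF Cauchy_Schwarz_ineq_sum] by (simp only: real_sqrt_abs)
  thus ?thesis unfolding inner norm[OF assms(1)] norm[OF assms(2)] by (simp add: real_sqrt_mult)
qed

lemma frob_inner_gram_le:
  assumes A: "A \<in> carrier_mat d r"
  shows "frob_inner (transpose_mat A * A) (transpose_mat A * A) \<le> (frob_inner A A)^2"
proof -
  define c where "c i = (\<Sum>k<d. (A $$ (k,i))^2)" for i
  have "frob_inner (transpose_mat A * A) (transpose_mat A * A)
      = (\<Sum>i<r. \<Sum>j<r. (\<Sum>k<d. A $$ (k,i) * A $$ (k,j))^2)"
    unfolding frob_inner_def using A by (auto intro!: sum.cong simp: power2_eq_square)
  also have "\<dots> \<le> (\<Sum>i<r. \<Sum>j<r. c i * c j)"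
    unfolding c_def by (intro sum_mono Cauchy_Schwarz_ineq_sum)
  also have "\<dots> = (\<Sum>i<r. c i)^2" by (simp add: power2_eq_square sum_product)
  also have "(\<Sum>i<r. c i) = frob_inner A A"
    unfolding frob_inner_def c_def using A by (simp add: power2_eq_square sum.swap[of _ "{..<r}"])
  finally show ?thesis .
qed

lemma frob_inner_outer_gram:
  assumes A: "A \<in> carrier_mat d r" and B: "B \<in> carrier_mat d r'"
  shows "frob_inner (A * transpose_mat A) (B * transpose_mat B)
       = frob_inner (transpose_mat A * B) (transpose_mat A * B)"
proof -
  have AA: "A * transpose_mat A \<in> carrier_mat d d" and AB: "transpose_mat A * B \<in> carrier_mat r r'"
    using A B by auto
  have "frob_inner (A * transpose_mat A) (B * transpose_mat B) = frob_inner (A * transpose_mat A * B) B"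
    using frob_inner_mult_right_transpose_right[OF AA B, of "transpose_mat B"] B by simp
  also have "A * transpose_mat A * B = A * (transpose_mat A * B)"
    using A B by (simp add: assoc_mult_mat[of _ d r _ d _ r'])
  also have "frob_inner (A * (transpose_mat A * B)) B = frob_inner B (A * (transpose_mat A * B))"
    using A B by (intro frob_inner_commute) auto
  also have "\<dots> = frob_inner (transpose_mat A * B) (transpose_mat A * B)"
    by (rule frob_inner_mult_right_transpose_left[OF B A AB])
  finally show ?thesis .
qed

lemma frob_inner_inner_gram:
  assumes A: "A \<in> carrier_mat d r" and B: "B \<in> carrier_mat d r"
  shows "frob_inner (transpose_mat A * A) (transpose_mat B * B)
       = frob_inner (B * transpose_mat A) (B * transpose_mat A)"
proof -
  have "frob_inner (transpose_mat A * A) (transpose_mat B * B) = frob_inner (A * transpose_mat B) (A * transpose_mat B)"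
    using frob_inner_outer_gram[of "transpose_mat A" r d "transpose_mat B" d] A B by simp
  also have "\<dots> = frob_inner (B * transpose_mat A) (B * transpose_mat A)"
    using frob_inner_transpose[of "A * transpose_mat B" d d "A * transpose_mat B"] A B
    by (simp add: transpose_mult[of _ d r _ d])
  finally show ?thesis .
qed

lemma frob_inner_mult_orthogonal:
  assumes Q: "Q \<in> carrier_mat r r" and QQ: "transpose_mat Q * Q = 1\<^sub>m r" and V: "V \<in> carrier_mat r m"
  shows "frob_inner (Q * V) (Q * V) = frob_inner V V"
proof -
  have "frob_inner (Q * V) (Q * V) = frob_inner (transpose_mat Q * (Q * V)) V"
    using Q V by (intro frob_inner_mult_right_transpose_left) auto
  also have "transpose_mat Q * (Q * V) = V"
    using Q V QQ by (simp add: assoc_mult_mat[of _ r r _ r _ m, symmetric])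
  finally show ?thesis .
qed

section \<open>Block-diagonal matrices\<close>

definition diag_mat_of :: "nat \<Rightarrow> (nat \<Rightarrow> real) \<Rightarrow> real mat" where
  "diag_mat_of n f = mat n n (\<lambda>(i,j). if i = j then f i else 0)"

definition block_sign :: "nat \<Rightarrow> nat \<Rightarrow> real" where
  "block_sign r1 i = (if i < r1 then 1 else -1)"

definition first_block_ind :: "nat \<Rightarrow> nat \<Rightarrow> real" where
  "first_block_ind r1 i = (if i < r1 then 1 else 0)"

definition second_block_ind :: "nat \<Rightarrow> nat \<Rightarrow> real" where
  "second_block_ind r1 i = (if i < r1 then 0 else 1)"

definition block_diagonal :: "nat \<Rightarrow> real mat \<Rightarrow> bool" where
  "block_diagonal r1 A \<longleftrightarrow> (\<forall>i<dim_row A. \<forall>j<dim_col A. (i < r1) \<noteq> (j < r1) \<longrightarrow> A $$ (i,j) = 0)"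

lemma diag_mat_of_carrier [simp]: "diag_mat_of n f \<in> carrier_mat n n"
  and dim_diag_mat_of [simp]: "dim_row (diag_mat_of n f) = n" "dim_col (diag_mat_of n f) = n"
  by (auto simp: diag_mat_of_def)

lemma index_diag_mat_of [simp]:
  "i < n \<Longrightarrow> j < n \<Longrightarrow> diag_mat_of n f $$ (i,j) = (if i = j then f i else 0)"
  by (simp add: diag_mat_of_def)

lemma transpose_diag_mat_of [simp]: "transpose_mat (diag_mat_of n f) = diag_mat_of n f"
  by (intro eq_matI) auto

lemma if_zero_mult [simp]:
  "(if P then x else (0::real)) * y = (if P then x * y else 0)"
  "y * (if P then x else (0::real)) = (if P then y * x else 0)"
  by auto

lemma index_diag_mat_of_mult [simp]:
  "i < n \<Longrightarrow> j < dim_col A \<Longrightarrow> dim_row A = n \<Longrightarrow> (diag_mat_of n f * A) $$ (i,j) = f i * A $$ (i,j)"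
  by simp

lemma index_mult_diag_mat_of [simp]:
  "i < dim_row A \<Longrightarrow> j < n \<Longrightarrow> dim_col A = n \<Longrightarrow> (A * diag_mat_of n f) $$ (i,j) = A $$ (i,j) * f j"
  by simp

lemma Lam_eq_diag_mat_of: "r1 \<le> r \<Longrightarrow> Lam r r1 = diag_mat_of r (block_sign r1)"
  by (intro eq_matI) (auto simp: Lam_def block_sign_def)

lemma Lam_carrier [simp]: "r1 \<le> r \<Longrightarrow> Lam r r1 \<in> carrier_mat r r"
  by (simp add: Lam_eq_diag_mat_of)

lemma block_diagonal_mult:
  assumes A: "A \<in> carrier_mat n k" and B: "B \<in> carrier_mat k m"
    and "block_diagonal r1 A" "block_diagonal r1 B"
  shows "block_diagonal r1 (A * B)"
  unfolding block_diagonal_def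
proof (intro allI impI)
  fix i j assume i: "i < dim_row (A * B)" and j: "j < dim_col (A * B)" and ne: "(i < r1) \<noteq> (j < r1)"
  have "A $$ (i,l) * B $$ (l,j) = 0" if l: "l < k" for l
  proof (cases "(i < r1) = (l < r1)")
    case True
    hence "(l < r1) \<noteq> (j < r1)" using ne by auto
    thus ?thesis using assms l j by (auto simp: block_diagonal_def)
  next
    case False
    thus ?thesis using assms l i by (auto simp: block_diagonal_def)
  qed
  thus "(A * B) $$ (i,j) = 0" using A B i j by (simp add: sum.neutral)
qed

lemma block_diagonal_transpose: "block_diagonal r1 A \<Longrightarrow> block_diagonal r1 (transpose_mat A)"
  by (auto simp: block_diagonal_def)

lemma block_diagonal_commute_diag_mat_of:
  assumes A: "A \<in> carrier_mat n n" and "block_diagonal r1 A"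
    and f: "\<And>i j. (i < r1) = (j < r1) \<Longrightarrow> f i = f j"
  shows "diag_mat_of n f * A = A * diag_mat_of n f"
proof (rule eq_matI)
  fix i j assume i: "i < dim_row (A * diag_mat_of n f)" and j: "j < dim_col (A * diag_mat_of n f)"
  show "(diag_mat_of n f * A) $$ (i,j) = (A * diag_mat_of n f) $$ (i,j)"
  proof (cases "(i < r1) = (j < r1)")
    case True thus ?thesis using i j A f[OF True] by simp
  next
    case False
    hence "A $$ (i,j) = 0" using assms(2) i j A unfolding block_diagonal_def by auto
    thus ?thesis using i j A by simp
  qed
qed (use A in auto)

lemma sum_lessThan_add: "sum f {..<(m::nat) + n} = sum f {..<m} + (\<Sum>i<n. f (m + i))"
  by (induction n) (auto simp: add.commute add.left_commute)

lemma QblockD: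
  assumes r1: "r1 \<le> r" and "Q \<in> Qblock r r1"
  shows "Q \<in> carrier_mat r r \<and> transpose_mat Q * Q = 1\<^sub>m r \<and> block_diagonal r1 Q"
proof -
  obtain Q1 Q2 where Q: "Q = four_block_mat Q1 (0\<^sub>m r1 (r - r1)) (0\<^sub>m (r - r1) r1) Q2"
    and Q1: "Q1 \<in> orth_mats r1" and Q2: "Q2 \<in> orth_mats (r - r1)"
    using assms(2) unfolding Qblock_def by blast
  have c1: "Q1 \<in> carrier_mat r1 r1" and o1: "transpose_mat Q1 * Q1 = 1\<^sub>m r1" using Q1 by (auto simp: orth_mats_def)
  have c2: "Q2 \<in> carrier_mat (r-r1) (r-r1)" and o2: "transpose_mat Q2 * Q2 = 1\<^sub>m (r-r1)" using Q2 by (auto simp: orth_mats_def)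
  have cQ: "Q \<in> carrier_mat r r" unfolding Q using four_block_carrier_mat[OF c1 c2] r1 by simp
  have tQ: "transpose_mat Q = four_block_mat (transpose_mat Q1) (0\<^sub>m r1 (r - r1)) (0\<^sub>m (r - r1) r1) (transpose_mat Q2)"
    unfolding Q by (subst transpose_four_block_mat[OF c1 _ _ c2]) auto
  have "transpose_mat Q * Q = four_block_mat (transpose_mat Q1 * Q1 + 0\<^sub>m r1 (r - r1) * 0\<^sub>m (r - r1) r1)
     (transpose_mat Q1 * 0\<^sub>m r1 (r - r1) + 0\<^sub>m r1 (r - r1) * Q2)
     (0\<^sub>m (r - r1) r1 * Q1 + transpose_mat Q2 * 0\<^sub>m (r - r1) r1)
     (0\<^sub>m (r - r1) r1 * 0\<^sub>m r1 (r - r1) + transpose_mat Q2 * Q2)"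
    unfolding tQ by (subst Q, rule mult_four_block_mat) (use c1 c2 in auto)
  also have "\<dots> = four_block_mat (1\<^sub>m r1) (0\<^sub>m r1 (r - r1)) (0\<^sub>m (r - r1) r1) (1\<^sub>m (r-r1))"
    using c1 c2 o1 o2 by (intro cong_four_block_mat) auto
  also have "\<dots> = 1\<^sub>m r" using r1 by simp
  finally have oQ: "transpose_mat Q * Q = 1\<^sub>m r" .
  have "block_diagonal r1 Q" unfolding block_diagonal_def Q using c1 c2 r1 by auto
  thus ?thesis using cQ oQ by auto
qed

lemma QblockI:
  assumes r1: "r1 \<le> r" and cQ: "Q \<in> carrier_mat r r" and oQ: "transpose_mat Q * Q = 1\<^sub>m r"
    and bQ: "block_diagonal r1 Q"
  shows "Q \<in> Qblock r r1"
proof -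
  have z: "Q $$ (i,j) = 0" if "i < r" "j < r" "(i < r1) \<noteq> (j < r1)" for i j
    using bQ that cQ by (auto simp: block_diagonal_def)
  have rr: "r = r1 + (r - r1)" using r1 by simp
  define Q1 where "Q1 = mat r1 r1 (\<lambda>(i,j). Q $$ (i,j))"
  define Q2 where "Q2 = mat (r-r1) (r-r1) (\<lambda>(i,j). Q $$ (r1 + i, r1 + j))"
  have oe: "(\<Sum>l<r. Q $$ (l,i) * Q $$ (l,j)) = (if i = j then 1 else 0)" if "i < r" "j < r" for i j
  proof -
    have "(transpose_mat Q * Q) $$ (i,j) = (if i = j then 1 else 0)" using oQ that by simp
    thus ?thesis using that cQ by simp
  qed
  have "transpose_mat Q1 * Q1 = 1\<^sub>m r1"
  proof (rule eq_matI)
    fix i j assume i: "i < dim_row (1\<^sub>m r1)" and j: "j < dim_col (1\<^sub>m r1)"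
    have "(transpose_mat Q1 * Q1) $$ (i,j) = (\<Sum>l<r1. Q $$ (l,i) * Q $$ (l,j))"
      using i j by (simp add: Q1_def)
    also have "\<dots> = (\<Sum>l<r. Q $$ (l,i) * Q $$ (l,j))"
      using i j r1 by (subst rr, subst sum_lessThan_add) (auto intro!: sum.neutral simp: z)
    also have "\<dots> = 1\<^sub>m r1 $$ (i,j)" using oe i j r1 by simp
    finally show "(transpose_mat Q1 * Q1) $$ (i,j) = 1\<^sub>m r1 $$ (i,j)" .
  qed (auto simp: Q1_def)
  hence Q1o: "Q1 \<in> orth_mats r1" by (auto simp: orth_mats_def Q1_def)
  have "transpose_mat Q2 * Q2 = 1\<^sub>m (r-r1)"
  proof (rule eq_matI)
    fix i j assume i: "i < dim_row (1\<^sub>m (r-r1))" and j: "j < dim_col (1\<^sub>m (r-r1))"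
    have "(transpose_mat Q2 * Q2) $$ (i,j) = (\<Sum>l<r-r1. Q $$ (r1+l,r1+i) * Q $$ (r1+l,r1+j))"
      using i j by (simp add: Q2_def)
    also have "\<dots> = (\<Sum>l<r. Q $$ (l,r1+i) * Q $$ (l,r1+j))"
      using i j r1 by (subst (2) rr, subst sum_lessThan_add) (auto intro!: sum.neutral simp: z)
    also have "\<dots> = 1\<^sub>m (r-r1) $$ (i,j)" using oe[of "r1+i" "r1+j"] i j r1 by simp
    finally show "(transpose_mat Q2 * Q2) $$ (i,j) = 1\<^sub>m (r-r1) $$ (i,j)" .
  qed (auto simp: Q2_def)
  hence Q2o: "Q2 \<in> orth_mats (r-r1)" by (auto simp: orth_mats_def Q2_def)
  have "Q = four_block_mat Q1 (0\<^sub>m r1 (r - r1)) (0\<^sub>m (r - r1) r1) Q2"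
    using cQ r1 by (intro eq_matI) (auto simp: Q1_def Q2_def z)
  thus ?thesis using Q1o Q2o unfolding Qblock_def by blast
qed

lemma Qblock_iff:
  "r1 \<le> r \<Longrightarrow>
   Q \<in> Qblock r r1 \<longleftrightarrow> Q \<in> carrier_mat r r \<and> transpose_mat Q * Q = 1\<^sub>m r \<and> block_diagonal r1 Q"
  using QblockD QblockI by blast

lemma Qblock_mult_closed:
  assumes r1: "r1 \<le> r" and "Q \<in> Qblock r r1" "R \<in> Qblock r r1"
  shows "Q * R \<in> Qblock r r1"
proof -
  have Q: "Q \<in> carrier_mat r r" "transpose_mat Q * Q = 1\<^sub>m r" "block_diagonal r1 Q"
   and R: "R \<in> carrier_mat r r" "transpose_mat R * R = 1\<^sub>m r" "block_diagonal r1 R"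
    using assms Qblock_iff[OF r1] by auto
  have "transpose_mat (Q * R) * (Q * R) = (transpose_mat R * transpose_mat Q) * (Q * R)"
    using Q R by (simp add: transpose_mult)
  also have "\<dots> = transpose_mat R * (transpose_mat Q * (Q * R))"
    using Q R by (subst assoc_mult_mat[of _ r r _ r _ r]) auto
  also have "transpose_mat Q * (Q * R) = (transpose_mat Q * Q) * R"
    using Q R by (subst assoc_mult_mat[of _ r r _ r _ r]) auto
  also have "\<dots> = R" using Q R by simp
  also have "transpose_mat R * R = 1\<^sub>m r" using R by simp
  finally show ?thesis using Qblock_iff[OF r1] Q R block_diagonal_mult[OF Q(1) R(1) Q(3) R(3)] by auto
qed

lemma Qblock_mult_transpose:
  assumes "r1 \<le> r" "Q \<in> Qblock r r1"
  shows "Q * transpose_mat Q = 1\<^sub>m r"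
  using assms by (intro mat_mult_left_right_inverse[of "transpose_mat Q" r Q]) (auto simp: Qblock_iff)

section \<open>Maximisers of the trace over the block-orthogonal group\<close>

lemma nonpos_of_le_quadratic:
  fixes y K :: real
  assumes h: "\<And>t. 0 < t \<Longrightarrow> t \<le> 1/2 \<Longrightarrow> sqrt (1 - t^2) * t * y \<le> t^2 * K"
  shows "y \<le> 0"
proof (rule ccontr)
  assume "\<not> y \<le> 0" hence y: "y > 0" by simp
  define t where "t = min (1/2) (y / (4 * (\<bar>K\<bar> + 1)))"
  have t0: "t > 0" using y by (auto simp: t_def)
  have t1: "t \<le> 1/2" unfolding t_def by (rule min.cobounded1)
  have t2: "t \<le> y / (4 * (\<bar>K\<bar> + 1))" unfolding t_def by (rule min.cobounded2)
  have "t * \<bar>K\<bar> \<le> y / (4 * (\<bar>K\<bar> + 1)) * \<bar>K\<bar>" using mult_right_mono[OF t2, of "\<bar>K\<bar>"] by simp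
  also have "\<dots> < y / 2"
  proof -
    have "y * \<bar>K\<bar> < y * (2 * (\<bar>K\<bar> + 1))" using y by (intro mult_strict_left_mono) auto
    thus ?thesis by (simp add: field_simps)
  qed
  finally have tk: "t * \<bar>K\<bar> < y / 2" .
  have c: "sqrt (1 - t^2) \<ge> 1/2"
  proof -
    have "t^2 \<le> (1/2)^2" using t0 t1 by (intro power_mono) auto
    hence "1/4 \<le> 1 - t^2" by (simp add: power2_eq_square)
    hence "sqrt (1/4) \<le> sqrt (1 - t^2)" by (rule real_sqrt_le_mono)
    moreover have "sqrt (1/4::real) = 1/2" by (simp add: real_sqrt_divide)
    ultimately show ?thesis by simp
  qed
  have "t^2 * K \<le> t * (t * \<bar>K\<bar>)" using t0 by (simp add: power2_eq_square mult_left_mono)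
  also have "\<dots> < t * (y / 2)" using tk t0 by simp
  also have "\<dots> \<le> sqrt (1 - t^2) * t * y"
  proof -
    have "(1/2) * (t * y) \<le> sqrt (1 - t^2) * (t * y)" using c t0 y by (intro mult_right_mono) auto
    thus ?thesis by (simp add: mult_ac)
  qed
  finally show False using h[OF t0 t1] by simp
qed

lemma eq_0_of_le_quadratic:
  fixes x K :: real
  assumes h: "\<And>s. \<bar>s\<bar> \<le> 1/2 \<Longrightarrow> sqrt (1 - s^2) * s * x \<le> s^2 * K"
  shows "x = 0"
proof -
  have "x \<le> 0" by (rule nonpos_of_le_quadratic[of x K]) (use h in auto)
  moreover have "-x \<le> 0"
  proof (rule nonpos_of_le_quadratic[of "-x" K])
    fix t :: real assume "0 < t" "t \<le> 1/2"
    thus "sqrt (1 - t^2) * t * (-x) \<le> t^2 * K" using h[of "-t"] by simp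
  qed
  ultimately show ?thesis by simp
qed

definition householder :: "nat \<Rightarrow> (nat \<Rightarrow> real) \<Rightarrow> real mat" where
  "householder r w = mat r r (\<lambda>(a,b). (if a = b then 1 else 0) - 2 / (\<Sum>l<r. (w l)^2) * w a * w b)"

definition block_supported :: "nat \<Rightarrow> nat \<Rightarrow> (nat \<Rightarrow> real) \<Rightarrow> bool" where
  "block_supported r1 r w \<longleftrightarrow> (\<forall>a<r. \<forall>b<r. w a \<noteq> 0 \<longrightarrow> w b \<noteq> 0 \<longrightarrow> (a < r1) = (b < r1))"

lemma householder_carrier [simp]: "householder r w \<in> carrier_mat r r"
  and dim_householder [simp]: "dim_row (householder r w) = r" "dim_col (householder r w) = r"
  by (auto simp: householder_def)

lemma householder_index:
  "a < r \<Longrightarrow> b < r \<Longrightarrow>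
   householder r w $$ (a,b) = (if a = b then 1 else 0) - 2 / (\<Sum>l<r. (w l)^2) * w a * w b"
  by (simp add: householder_def)

lemma householder_orthogonal:
  assumes s: "(\<Sum>l<r. (w l)^2) > 0"
  shows "transpose_mat (householder r w) * householder r w = 1\<^sub>m r"
proof (rule eq_matI)
  fix a b assume a: "a < dim_row (1\<^sub>m r)" and b: "b < dim_col (1\<^sub>m r)"
  define S where "S = (\<Sum>l<r. (w l)^2)"
  define c where "c = 2 / S"
  have cS: "c * c * S = 2 * c" using s by (simp add: c_def S_def field_simps power2_eq_square)
  have "(transpose_mat (householder r w) * householder r w) $$ (a,b)
      = (\<Sum>l<r. ((if l = a then 1 else 0) - c * w l * w a) * ((if l = b then 1 else 0) - c * w l * w b))"
    using a b by (auto simp: householder_index c_def S_def intro!: sum.cong)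
  also have "\<dots> = (\<Sum>l<r. (if l = a then (if a = b then 1 else 0) else 0) - (if l = a then c * w a * w b else 0)
      - (if l = b then c * w a * w b else 0) + c * c * w a * w b * (w l)^2)"
    by (intro sum.cong refl) (auto simp: algebra_simps power2_eq_square)
  also have "\<dots> = (if a = b then 1 else 0) - c * w a * w b - c * w a * w b + c * c * w a * w b * S"
    using a b by (simp add: sum.distrib sum_subtractf sum_distrib_left[symmetric] S_def)
  also have "\<dots> = 1\<^sub>m r $$ (a,b)" using a b cS by (simp add: algebra_simps) (metis mult.assoc mult.commute)
  finally show "(transpose_mat (householder r w) * householder r w) $$ (a,b) = 1\<^sub>m r $$ (a,b)" .
qed auto

lemma householder_in_Qblock:
  assumes r1: "r1 \<le> r" and s: "(\<Sum>l<r. (w l)^2) > 0" and ws: "block_supported r1 r w"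
  shows "householder r w \<in> Qblock r r1"
proof -
  have "block_diagonal r1 (householder r w)" unfolding block_diagonal_def
  proof (intro allI impI)
    fix a b assume a: "a < dim_row (householder r w)" and b: "b < dim_col (householder r w)" and ne: "(a < r1) \<noteq> (b < r1)"
    hence "w a * w b = 0" using ws unfolding block_supported_def by auto
    moreover have "a \<noteq> b" using ne by auto
    ultimately show "householder r w $$ (a,b) = 0" using a b by (simp add: householder_index)
  qed
  thus ?thesis using Qblock_iff[OF r1] householder_orthogonal[OF s] by auto
qed

lemma frob_inner_householder:
  assumes P: "P \<in> carrier_mat r r"
  shows "frob_inner P (householder r w)
       = (\<Sum>a<r. P $$ (a,a)) - 2 / (\<Sum>l<r. (w l)^2) * (\<Sum>a<r. \<Sum>b<r. w a * P $$ (a,b) * w b)"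
proof -
  define c where "c = 2 / (\<Sum>l<r. (w l)^2)"
  have "frob_inner P (householder r w) = (\<Sum>a<r. \<Sum>b<r. (if a = b then P $$ (a,b) else 0) - c * (w a * P $$ (a,b) * w b))"
    unfolding frob_inner_def using P by (auto simp: householder_index c_def algebra_simps intro!: sum.cong)
  also have "\<dots> = (\<Sum>a<r. P $$ (a,a)) - c * (\<Sum>a<r. \<Sum>b<r. w a * P $$ (a,b) * w b)"
    by (simp add: sum_subtractf sum_distrib_left sum.delta)
  finally show ?thesis by (simp add: c_def)
qed

lemma householder_unit:
  assumes "a < r"
  shows "householder r (\<lambda>l. if l = a then 1 else 0) = diag_mat_of r (\<lambda>i. if i = a then -1 else 1)"
proof -
  have "(\<Sum>l<r. (if l = a then 1 else 0 :: real)^2) = 1"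
    using assms by (simp add: if_distrib[of "\<lambda>x. x^2"] cong: if_cong)
  thus ?thesis by (intro eq_matI) (auto simp: householder_index)
qed

lemma sum_two_points:
  fixes c s :: real and a b r :: nat and g :: "nat \<Rightarrow> real"
  assumes "a \<noteq> b" "a < r" "b < r"
  shows "(\<Sum>l<r. ((if l = a then c else 0) + (if l = b then s else 0)) * g l) = c * g a + s * g b"
proof -
  have "(\<Sum>l<r. ((if l = a then c else 0) + (if l = b then s else 0)) * g l)
     = (\<Sum>l<r. (if l = a then c * g a else 0) + (if l = b then s * g b else 0))"
    using assms by (intro sum.cong refl) auto
  also have "\<dots> = c * g a + s * g b" using assms by (simp add: sum.distrib sum.delta)
  finally show ?thesis .
qed

lemma sum_sq_two_points:
  fixes c s :: real and a b r :: nat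
  assumes "a \<noteq> b" "a < r" "b < r"
  shows "(\<Sum>l<r. ((if l = a then c else 0) + (if l = b then s else 0))^2) = c^2 + s^2"
  using sum_two_points[OF assms, of c s "\<lambda>l. (if l = a then c else 0) + (if l = b then s else 0)"] assms
  by (simp add: power2_eq_square)

text \<open>The product of the two reflections is a rotation in the \<open>(a,b)\<close>-plane, by twice the angle of \<open>(c,s)\<close>.\<close>

lemma frob_inner_householder_rotation:
  fixes c s :: real
  assumes P: "P \<in> carrier_mat r r" and a: "a < r" and b: "b < r" and ab: "a \<noteq> b"
    and cs: "c^2 + s^2 = 1"
  defines "v \<equiv> \<lambda>l. (if l = a then c else 0) + (if l = b then s else 0)"
  shows "frob_inner P (householder r (\<lambda>l. if l = a then 1 else 0) * householder r v)
       = (\<Sum>i<r. P $$ (i,i)) + 2 * c * s * (P $$ (a,b) - P $$ (b,a)) - 2 * s^2 * (P $$ (a,a) + P $$ (b,b))"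
proof -
  define T where "T = diag_mat_of r (\<lambda>i. if i = a then -1 else 1) * P"
  have T: "T \<in> carrier_mat r r" unfolding T_def using P by (rule mult_carrier_mat[OF diag_mat_of_carrier])
  have Tent: "T $$ (i,j) = (if i = a then - P $$ (i,j) else P $$ (i,j))" if "i < r" "j < r" for i j
    using that P by (simp add: T_def)
  have norm_v: "(\<Sum>l<r. (v l)^2) = 1" unfolding v_def sum_sq_two_points[OF ab a b] by (rule cs)
  have quad: "(\<Sum>i<r. \<Sum>j<r. v i * T $$ (i,j) * v j)
      = c * (c * T $$ (a,a) + s * T $$ (a,b)) + s * (c * T $$ (b,a) + s * T $$ (b,b))"
  proof -
    have "(\<Sum>i<r. \<Sum>j<r. v i * T $$ (i,j) * v j) = (\<Sum>i<r. v i * (\<Sum>j<r. v j * T $$ (i,j)))"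
      by (simp add: sum_distrib_left mult_ac)
    also have "\<dots> = (\<Sum>i<r. v i * (c * T $$ (i,a) + s * T $$ (i,b)))"
      unfolding v_def by (simp only: sum_two_points[OF ab a b])
    also have "\<dots> = c * (c * T $$ (a,a) + s * T $$ (a,b)) + s * (c * T $$ (b,a) + s * T $$ (b,b))"
      unfolding v_def by (rule sum_two_points[OF ab a b])
    finally show ?thesis .
  qed
  have trace: "(\<Sum>i<r. T $$ (i,i)) = (\<Sum>i<r. P $$ (i,i)) - 2 * P $$ (a,a)"
  proof -
    have "(\<Sum>i<r. T $$ (i,i)) = (\<Sum>i<r. P $$ (i,i) - (if i = a then 2 * P $$ (a,a) else 0))"
      by (intro sum.cong refl) (simp add: Tent)
    thus ?thesis using a by (simp add: sum_subtractf)
  qed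
  have "frob_inner P (householder r (\<lambda>l. if l = a then 1 else 0) * householder r v)
      = frob_inner T (householder r v)"
    using frob_inner_mult_right_transpose_left[OF P, of "householder r (\<lambda>l. if l = a then 1 else 0)" r]
    by (simp add: householder_unit[OF a] T_def)
  also have "\<dots> = (\<Sum>i<r. P $$ (i,i)) - 2 * P $$ (a,a)
      - 2 * (c * (c * T $$ (a,a) + s * T $$ (a,b)) + s * (c * T $$ (b,a) + s * T $$ (b,b)))"
    using frob_inner_householder[OF T, of v] by (simp add: norm_v quad trace)
  also have "\<dots> = (\<Sum>i<r. P $$ (i,i)) + 2 * c * s * (P $$ (a,b) - P $$ (b,a)) - 2 * s^2 * (P $$ (a,a) + P $$ (b,b))"
  proof -
    have "P $$ (a,a) * (c^2 + s^2) = P $$ (a,a)" using cs by simp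
    thus ?thesis using a b ab by (simp add: Tent algebra_simps power2_eq_square)
  qed
  finally show ?thesis .
qed

locale block_trace_maximizer =
  fixes P :: "real mat" and r r1 :: nat
  assumes carrier: "P \<in> carrier_mat r r" and r1: "r1 \<le> r"
    and maximal: "\<And>R. R \<in> Qblock r r1 \<Longrightarrow> frob_inner P R \<le> frob_inner P (1\<^sub>m r)"
begin

lemma quadratic_form_nonneg:
  assumes ws: "block_supported r1 r w"
  shows "0 \<le> (\<Sum>a<r. \<Sum>b<r. w a * P $$ (a,b) * w b)"
proof (cases "(\<Sum>l<r. (w l)^2) > 0")
  case True
  have "frob_inner P (householder r w) \<le> frob_inner P (1\<^sub>m r)"
    by (rule maximal[OF householder_in_Qblock[OF r1 True ws]])
  hence "2 / (\<Sum>l<r. (w l)^2) * (\<Sum>a<r. \<Sum>b<r. w a * P $$ (a,b) * w b) \<ge> 0"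
    unfolding frob_inner_householder[OF carrier] frob_inner_one_right[OF carrier] by simp
  thus ?thesis using True by (auto simp: zero_le_divide_iff zero_le_mult_iff)
next
  case False
  hence "(\<Sum>l<r. (w l)^2) = 0" using sum_nonneg[of "{..<r}" "\<lambda>l. (w l)^2"] by auto
  hence "\<forall>l\<in>{..<r}. (w l)^2 = 0" by (subst sum_nonneg_eq_0_iff[symmetric]) auto
  thus ?thesis by simp
qed

text \<open>Against rotations by small angles in the \<open>(a,b)\<close>-plane, the first-order term
  \<open>2cs (P\<^sub>a\<^sub>b - P\<^sub>b\<^sub>a)\<close> must be dominated by a second-order one, so it vanishes.\<close>

lemma symmetric_on_diagonal_blocks:
  assumes a: "a < r" and b: "b < r" and ab: "(a < r1) = (b < r1)"
  shows "P $$ (a,b) = P $$ (b,a)"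
proof (cases "a = b")
  case False
  have "sqrt (1 - s^2) * s * (P $$ (a,b) - P $$ (b,a)) \<le> s^2 * (P $$ (a,a) + P $$ (b,b))"
    if s: "\<bar>s\<bar> \<le> 1/2" for s
  proof -
    define c where "c = sqrt (1 - s^2)"
    have "s^2 \<le> 1" using s abs_le_square_iff[of s 1] by auto
    hence cs: "c^2 + s^2 = 1" by (simp add: c_def)
    define u where "u = (\<lambda>l. if l = a then (1::real) else 0)"
    define v where "v = (\<lambda>l. (if l = a then c else 0) + (if l = b then s else 0))"
    have "(\<Sum>l<r. (v l)^2) = 1" unfolding v_def sum_sq_two_points[OF False a b] by (rule cs)
    moreover have "(\<Sum>l<r. (u l)^2) = 1"
      using a by (simp add: u_def if_distrib[of "\<lambda>x. x^2"] cong: if_cong)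
    moreover have "block_supported r1 r u" by (simp add: block_supported_def u_def)
    moreover have "block_supported r1 r v" unfolding block_supported_def
    proof (intro allI impI)
      fix i j assume "i < r" "j < r" "v i \<noteq> 0" "v j \<noteq> 0"
      hence "i = a \<or> i = b" "j = a \<or> j = b" by (auto simp: v_def split: if_splits)
      thus "(i < r1) = (j < r1)" using ab by auto
    qed
    ultimately have "householder r u * householder r v \<in> Qblock r r1"
      by (intro Qblock_mult_closed[OF r1] householder_in_Qblock[OF r1]) simp_all
    from maximal[OF this]
    have "2 * c * s * (P $$ (a,b) - P $$ (b,a)) \<le> 2 * s^2 * (P $$ (a,a) + P $$ (b,b))"
      unfolding u_def v_def frob_inner_householder_rotation[OF carrier a b False cs]
        frob_inner_one_right[OF carrier] by simp
    thus ?thesis by (simp add: c_def)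
  qed
  from eq_0_of_le_quadratic[OF this] show ?thesis by simp
qed simp

end

section \<open>Singular values and the Procrustes inequality\<close>

lemma sum_diagonal_mat_row:
  fixes D :: "real mat" and f :: "nat \<Rightarrow> real"
  assumes "diagonal_mat D" "D \<in> carrier_mat r r" "a < r"
  shows "(\<Sum>l<r. D $$ (a,l) * f l) = D $$ (a,a) * f a"
proof -
  have "(\<Sum>l<r. D $$ (a,l) * f l) = (\<Sum>l<r. if l = a then D $$ (a,a) * f a else 0)"
    using assms by (intro sum.cong refl) (auto simp: diagonal_mat_def)
  thus ?thesis using assms by (simp add: sum.delta)
qed

lemma eigenvalue_diagonal_mat_iff:
  fixes D :: "real mat"
  assumes diag: "diagonal_mat D" and D: "D \<in> carrier_mat r r"
  shows "eigenvalue D k \<longleftrightarrow> (\<exists>b<r. k = D $$ (b,b))"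
proof
  assume "eigenvalue D k"
  then obtain v where v: "v \<in> carrier_vec r" "v \<noteq> 0\<^sub>v r" "D *\<^sub>v v = k \<cdot>\<^sub>v v"
    using D by (auto simp: eigenvalue_def eigenvector_def)
  obtain b where b: "b < r" "v $ b \<noteq> 0"
    using v(1,2) by (metis carrier_vecD eq_vecI index_zero_vec)
  have "k * v $ b = (D *\<^sub>v v) $ b" using v b by simp
  also have "\<dots> = (\<Sum>l<r. D $$ (b,l) * v $ l)"
    using D v(1) b by (simp add: scalar_prod_def atLeast0LessThan)
  also have "\<dots> = D $$ (b,b) * v $ b" by (rule sum_diagonal_mat_row[OF diag D b(1)])
  finally show "\<exists>b<r. k = D $$ (b,b)" using b by auto
next
  assume "\<exists>b<r. k = D $$ (b,b)"
  then obtain a where a: "a < r" and k: "k = D $$ (a,a)" by auto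
  have "D *\<^sub>v unit_vec r a = k \<cdot>\<^sub>v unit_vec r a"
    using diag D a by (intro eq_vecI) (auto simp: k diagonal_mat_def)
  moreover have "(unit_vec r a :: real vec) \<noteq> 0\<^sub>v r"
    using a by (metis index_unit_vec(1) index_zero_vec(1) zero_neq_one)
  ultimately show "eigenvalue D k"
    using D unfolding eigenvalue_def eigenvector_def by (intro exI[of _ "unit_vec r a"]) auto
qed

lemma smallest_singular_value_sq_le_gram_diag:
  assumes Us: "Us \<in> carrier_mat d r" and orth: "orthogonal_mat Us" and a: "a < r"
  shows "(smallest_singular_value Us)^2 \<le> (transpose_mat Us * Us) $$ (a,a)"
proof -
  define D where "D = transpose_mat Us * Us"
  have D: "D \<in> carrier_mat r r" using Us by (simp add: D_def)
  have diag: "diagonal_mat D" using orth by (simp add: orthogonal_mat_def D_def Let_def)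
  have eig: "{k. eigenvalue D k} = (\<lambda>b. D $$ (b,b)) ` {..<r}"
    by (auto simp: eigenvalue_diagonal_mat_iff[OF diag D])
  have "D $$ (b,b) \<ge> 0" if "b < r" for b using that Us by (simp add: D_def sum_nonneg)
  hence "Min {k. eigenvalue D k} \<ge> 0" using a unfolding eig by (subst Min_ge_iff) auto
  hence "(smallest_singular_value Us)^2 = Min {k. eigenvalue D k}"
    unfolding smallest_singular_value_def D_def by simp
  also have "\<dots> \<le> D $$ (a,a)" unfolding eig using a by (intro Min_le) auto
  finally show ?thesis by (simp add: D_def)
qed

lemma frob_inner_mult_ge_smallest_singular_value:
  assumes Us: "Us \<in> carrier_mat d r" and orth: "orthogonal_mat Us" and W: "W \<in> carrier_mat r m"
  shows "frob_inner (Us * W) (Us * W) \<ge> (smallest_singular_value Us)^2 * frob_inner W W"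
proof -
  define D where "D = transpose_mat Us * Us"
  define \<sigma> where "\<sigma> = smallest_singular_value Us"
  have Dc: "D \<in> carrier_mat r r" using Us by (simp add: D_def)
  have diag: "diagonal_mat D" using orth by (simp add: orthogonal_mat_def D_def Let_def)
  have "frob_inner (Us * W) (Us * W) = frob_inner (transpose_mat Us * (Us * W)) W"
    by (rule frob_inner_mult_right_transpose_left) (use Us W in auto)
  also have "transpose_mat Us * (Us * W) = D * W"
    unfolding D_def using Us W by (subst assoc_mult_mat[of _ r d _ r _ m]) auto
  also have "frob_inner (D * W) W = (\<Sum>i<r. \<Sum>j<m. D $$ (i,i) * (W $$ (i,j))^2)"
    unfolding frob_inner_def using Dc W
    by (auto intro!: sum.cong simp: sum_diagonal_mat_row[OF diag Dc] power2_eq_square)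
  also have "\<dots> \<ge> (\<Sum>i<r. \<Sum>j<m. \<sigma>^2 * (W $$ (i,j))^2)"
    using smallest_singular_value_sq_le_gram_diag[OF Us orth] by (auto intro!: sum_mono mult_right_mono simp: \<sigma>_def D_def)
  also have "(\<Sum>i<r. \<Sum>j<m. \<sigma>^2 * (W $$ (i,j))^2) = \<sigma>^2 * frob_inner W W"
    unfolding frob_inner_def using W by (simp add: sum_distrib_left power2_eq_square)
  finally show ?thesis by (simp add: \<sigma>_def)
qed

lemma frob_inner_diff_mult_orthogonal:
  assumes U: "U \<in> carrier_mat d r" and Y: "Y \<in> carrier_mat d r" and R: "R \<in> carrier_mat r r"
    and RR: "R * transpose_mat R = 1\<^sub>m r"
  shows "frob_inner (U - Y * R) (U - Y * R)
       = frob_inner U U - 2 * frob_inner (transpose_mat Y * U) R + frob_inner Y Y"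
proof -
  have YR: "Y * R \<in> carrier_mat d r" using Y R by simp
  have cross: "frob_inner U (Y * R) = frob_inner (transpose_mat Y * U) R"
    by (rule frob_inner_mult_right_transpose_left[OF U Y R])
  have "frob_inner (Y * R) (Y * R) = frob_inner (Y * R * transpose_mat R) Y"
    by (rule frob_inner_mult_right_transpose_right[OF YR Y R])
  also have "Y * R * transpose_mat R = Y" using Y R RR by (subst assoc_mult_mat) auto
  finally have square: "frob_inner (Y * R) (Y * R) = frob_inner Y Y" .
  show ?thesis
    using frob_inner_diff_left[OF _ U YR, of "U - Y * R"] frob_inner_diff_right[OF U U YR]
      frob_inner_diff_right[OF YR U YR] frob_inner_commute[OF YR U] cross square YR
    by simp
qed

lemma outer_diff_eq:
  fixes X Y :: "real mat"
  assumes X: "X \<in> carrier_mat d n" and Y: "Y \<in> carrier_mat d n"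
  shows "X * transpose_mat X - Y * transpose_mat Y
       = (X - Y) * transpose_mat (X - Y) + (X - Y) * transpose_mat Y + Y * transpose_mat (X - Y)"
proof (rule eq_matI)
  fix i j assume "i < dim_row ((X - Y) * transpose_mat (X - Y) + (X - Y) * transpose_mat Y + Y * transpose_mat (X - Y))"
    and "j < dim_col ((X - Y) * transpose_mat (X - Y) + (X - Y) * transpose_mat Y + Y * transpose_mat (X - Y))"
  hence ij: "i < d" "j < d" using Y by auto
  have "(X * transpose_mat X - Y * transpose_mat Y) $$ (i,j)
      = (\<Sum>l<n. X $$ (i,l) * X $$ (j,l) - Y $$ (i,l) * Y $$ (j,l))"
    using X Y ij by (simp add: sum_subtractf)
  also have "\<dots> = (\<Sum>l<n. (X $$ (i,l) - Y $$ (i,l)) * (X $$ (j,l) - Y $$ (j,l))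
      + (X $$ (i,l) - Y $$ (i,l)) * Y $$ (j,l) + Y $$ (i,l) * (X $$ (j,l) - Y $$ (j,l)))"
    by (intro sum.cong refl) (simp add: algebra_simps)
  also have "\<dots> = ((X - Y) * transpose_mat (X - Y) + (X - Y) * transpose_mat Y + Y * transpose_mat (X - Y)) $$ (i,j)"
    using X Y ij by (simp add: sum.distrib)
  finally show "(X * transpose_mat X - Y * transpose_mat Y) $$ (i,j) = \<dots>" .
qed (use X Y in auto)

lemma frob_inner_outer_diff_expand:
  fixes X Y :: "real mat"
  assumes X: "X \<in> carrier_mat d n" and Y: "Y \<in> carrier_mat d n"
  defines "N \<equiv> transpose_mat (X - Y) * (X - Y)" and "S \<equiv> transpose_mat Y * (X - Y)"
    and "H \<equiv> transpose_mat Y * Y"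
  assumes S_sym: "transpose_mat S = S"
  shows "frob_inner (X * transpose_mat X - Y * transpose_mat Y) (X * transpose_mat X - Y * transpose_mat Y)
       = frob_inner N N + 2 * frob_inner N H + 4 * frob_inner N S + 2 * frob_inner S S"
proof -
  define De where "De = X - Y"
  define Nd where "Nd = De * transpose_mat De"
  define A where "A = De * transpose_mat Y"
  define At where "At = Y * transpose_mat De"
  have De: "De \<in> carrier_mat d n" using Y by (simp add: De_def)
  have DeT: "transpose_mat De \<in> carrier_mat n d" and YT: "transpose_mat Y \<in> carrier_mat n d"
    using De Y by auto
  have cN: "N \<in> carrier_mat n n" and cS: "S \<in> carrier_mat n n" and cNd: "Nd \<in> carrier_mat d d"
    and cA: "A \<in> carrier_mat d d" and cAt: "At \<in> carrier_mat d d"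
    using De Y by (auto simp: N_def S_def Nd_def A_def At_def De_def)
  have ST: "transpose_mat S = transpose_mat De * Y"
    unfolding S_def De_def[symmetric] using De Y by (simp add: transpose_mult[of _ n d De n])
  have AtT: "At = transpose_mat A" unfolding At_def A_def using De Y by (simp add: transpose_mult)
  have NdT: "transpose_mat Nd = Nd" unfolding Nd_def using De by (simp add: transpose_mult)
  have "frob_inner (Nd + A + At) (Nd + A + At) = frob_inner Nd Nd + frob_inner A A + frob_inner At At
      + 2 * frob_inner Nd A + 2 * frob_inner Nd At + 2 * frob_inner A At"
    using cNd cA cAt frob_inner_commute[OF cA cNd] frob_inner_commute[OF cAt cNd] frob_inner_commute[OF cAt cA]
    by (simp add: frob_inner_add_left[of _ d d] frob_inner_add_right[of _ d d])
  moreover have "frob_inner Nd Nd = frob_inner N N"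
    unfolding Nd_def N_def De_def[symmetric] by (rule frob_inner_outer_gram[OF De De])
  moreover have "frob_inner At At = frob_inner N H"
    unfolding At_def N_def H_def De_def[symmetric] by (rule frob_inner_inner_gram[OF De Y, symmetric])
  moreover have "frob_inner A A = frob_inner At At"
    unfolding AtT by (rule frob_inner_transpose[OF cA cA, symmetric])
  moreover have "frob_inner Nd At = frob_inner Nd A"
    using frob_inner_transpose[OF cNd cAt] unfolding NdT AtT by simp
  moreover have "frob_inner Nd A = frob_inner N S"
  proof -
    have "De * S = De * transpose_mat S" using S_sym by simp
    also have "\<dots> = Nd * Y" unfolding ST Nd_def using De Y by (simp add: assoc_mult_mat[of _ d n _ d _ n])
    finally have "De * S = Nd * Y" .
    moreover have "frob_inner Nd A = frob_inner (Nd * Y) De"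
      using frob_inner_mult_right_transpose_right[OF cNd De YT] by (simp add: A_def)
    moreover have "frob_inner N S = frob_inner (De * S) De"
      using frob_inner_mult_right_transpose_left[OF cS DeT De] frob_inner_commute[OF cN cS]
      by (simp add: N_def De_def)
    ultimately show ?thesis by simp
  qed
  moreover have "frob_inner A At = frob_inner S S"
  proof -
    have "frob_inner A At = frob_inner (A * De) Y"
      using frob_inner_mult_right_transpose_right[OF cA Y DeT] by (simp add: At_def)
    moreover have "frob_inner S S = frob_inner (De * S) Y"
      using frob_inner_mult_right_transpose_left[OF cS DeT Y] S_sym ST by simp
    moreover have "A * De = De * S"
      unfolding A_def S_def De_def[symmetric] using De Y by (simp add: assoc_mult_mat[of _ d n _ d _ n])
    ultimately show ?thesis by simp
  qed
  ultimately show ?thesis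
    using outer_diff_eq[OF X Y] unfolding Nd_def A_def At_def De_def by simp
qed

text \<open>Lemma 5.4 of Tu, Boczar, Simchowitz, Soltanolkotabi and Recht,
  \<^emph>\<open>Low-rank solutions of linear matrix equations via Procrustes flow\<close>.\<close>

lemma frob_inner_outer_diff_ge:
  fixes X Y :: "real mat"
  assumes X: "X \<in> carrier_mat d n" and Y: "Y \<in> carrier_mat d n"
    and S_sym: "transpose_mat (transpose_mat Y * (X - Y)) = transpose_mat Y * (X - Y)"
    and cond: "frob_inner (transpose_mat (X - Y) * (X - Y)) (transpose_mat Y * X) \<ge> 0"
  shows "frob_inner (X * transpose_mat X - Y * transpose_mat Y) (X * transpose_mat X - Y * transpose_mat Y)
     \<ge> 2 * (sqrt 2 - 1) * frob_inner (transpose_mat (X - Y) * (X - Y)) (transpose_mat Y * Y)"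
proof -
  define N where "N = transpose_mat (X - Y) * (X - Y)"
  define S where "S = transpose_mat Y * (X - Y)"
  define H where "H = transpose_mat Y * Y"
  define t where "t = sqrt (2::real)"
  have cN: "N \<in> carrier_mat n n" and cS: "S \<in> carrier_mat n n" and cH: "H \<in> carrier_mat n n"
    using Y by (auto simp: N_def S_def H_def)
  have "transpose_mat Y * X = H + S"
  proof (rule eq_matI)
    fix i j assume "i < dim_row (H + S)" "j < dim_col (H + S)"
    hence ij: "i < n" "j < n" using cS by auto
    have "(transpose_mat Y * X) $$ (i,j) = (\<Sum>l<d. Y $$ (l,i) * Y $$ (l,j) + Y $$ (l,i) * (X $$ (l,j) - Y $$ (l,j)))"
      using X Y ij by (simp add: algebra_simps)
    also have "\<dots> = (H + S) $$ (i,j)" using X Y ij by (simp add: H_def S_def sum.distrib)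
    finally show "(transpose_mat Y * X) $$ (i,j) = (H + S) $$ (i,j)" .
  qed (use X Y cS in auto)
  hence NH_NS: "frob_inner N H + frob_inner N S \<ge> 0"
    using cond frob_inner_add_right[OF cN cH cS] by (simp add: N_def)
  have "0 \<le> frob_inner (N + t \<cdot>\<^sub>m S) (N + t \<cdot>\<^sub>m S)" by (rule frob_inner_self_nonneg)
  also have "\<dots> = frob_inner N N + 2 * t * frob_inner N S + t * t * frob_inner S S"
    using cN cS frob_inner_commute[OF cS cN]
    by (simp add: frob_inner_add_left[of _ n n] frob_inner_add_right[of _ n n]
        frob_inner_smult_left[of _ n n] frob_inner_smult_right[of _ n n] algebra_simps)
  finally have square: "0 \<le> frob_inner N N + 2 * t * frob_inner N S + 2 * frob_inner S S"
    by (simp add: t_def)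
  have "t \<le> 2" unfolding t_def by (rule real_sqrt_le_iff[THEN iffD2, of 2 4, simplified])
  hence "0 \<le> (4 - 2 * t) * (frob_inner N H + frob_inner N S)" using NH_NS by simp
  with square have "2 * (t - 1) * frob_inner N H
      \<le> frob_inner N N + 2 * frob_inner N H + 4 * frob_inner N S + 2 * frob_inner S S"
    by (simp add: algebra_simps)
  thus ?thesis
    using frob_inner_outer_diff_expand[OF X Y] S_sym by (simp add: N_def S_def H_def t_def)
qed

lemma diag_mat_of_idem_mult_transpose:
  assumes A: "A \<in> carrier_mat d r" and f: "\<And>i. f i * f i = f i"
  shows "diag_mat_of r f * transpose_mat (A * diag_mat_of r f) = transpose_mat (A * diag_mat_of r f)"
proof (rule eq_matI)
  fix i j assume "i < dim_row (transpose_mat (A * diag_mat_of r f))" "j < dim_col (transpose_mat (A * diag_mat_of r f))"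
  hence ij: "i < r" "j < d" using A by auto
  have "f i * (A $$ (j,i) * f i) = A $$ (j,i) * (f i * f i)" by (simp only: mult_ac)
  thus "(diag_mat_of r f * transpose_mat (A * diag_mat_of r f)) $$ (i,j)
      = transpose_mat (A * diag_mat_of r f) $$ (i,j)"
    using A ij by (simp add: f)
qed (use A in auto)

lemma block_cross_gram_symmetric:
  assumes U: "U \<in> carrier_mat d r" and Y: "Y \<in> carrier_mat d r"
    and opt: "block_trace_maximizer (transpose_mat Y * U) r r1"
    and f_supp: "\<And>i j. f i \<noteq> 0 \<Longrightarrow> f j \<noteq> 0 \<Longrightarrow> (i < r1) = (j < r1)"
  defines "F \<equiv> diag_mat_of r f"
  shows "transpose_mat (transpose_mat (Y * F) * (U * F - Y * F)) = transpose_mat (Y * F) * (U * F - Y * F)"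
proof -
  interpret block_trace_maximizer "transpose_mat Y * U" r r1 by (rule opt)
  define P where "P = transpose_mat Y * U"
  define C where "C = transpose_mat (Y * F) * (U * F - Y * F)"
  have C: "C \<in> carrier_mat r r" using U Y by (auto simp: C_def F_def intro!: mult_carrier_mat[of _ r d])
  have Cent: "C $$ (i,j) = f i * f j * (P $$ (i,j) - (\<Sum>k<d. Y $$ (k,i) * Y $$ (k,j)))"
    if "i < r" "j < r" for i j
    using that U Y by (simp add: C_def P_def F_def sum_subtractf sum_distrib_left algebra_simps)
  have "transpose_mat C = C"
  proof (rule eq_matI)
    fix i j assume "i < dim_row C" "j < dim_col C"
    hence ij: "i < r" "j < r" using C by auto
    show "transpose_mat C $$ (i,j) = C $$ (i,j)"
    proof (cases "f i = 0 \<or> f j = 0")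
      case True thus ?thesis using ij C by (auto simp: Cent)
    next
      case False
      hence "P $$ (j,i) = P $$ (i,j)"
        using f_supp symmetric_on_diagonal_blocks ij by (auto simp: P_def)
      thus ?thesis using ij C by (simp add: Cent mult.commute)
    qed
  qed (use C in auto)
  thus ?thesis by (simp add: C_def)
qed

lemma block_cross_gram_nonneg:
  assumes U: "U \<in> carrier_mat d r" and Y: "Y \<in> carrier_mat d r"
    and opt: "block_trace_maximizer (transpose_mat Y * U) r r1"
    and f_idem: "\<And>i. f i * f i = f i"
    and f_supp: "\<And>i j. f i \<noteq> 0 \<Longrightarrow> f j \<noteq> 0 \<Longrightarrow> (i < r1) = (j < r1)"
  defines "F \<equiv> diag_mat_of r f"
  shows "frob_inner (transpose_mat (U * F - Y * F) * (U * F - Y * F)) (transpose_mat (Y * F) * (U * F)) \<ge> 0"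
proof -
  interpret block_trace_maximizer "transpose_mat Y * U" r r1 by (rule opt)
  define P where "P = transpose_mat Y * U"
  define w where "w k i = (U $$ (k,i) - Y $$ (k,i)) * f i" for k i
  have entry: "(transpose_mat (U * F - Y * F) * (U * F - Y * F)) $$ (i,j) * (transpose_mat (Y * F) * (U * F)) $$ (i,j)
      = (\<Sum>k<d. w k i * P $$ (i,j) * w k j)" if "i < r" "j < r" for i j
  proof -
    have gram: "(transpose_mat (U * F - Y * F) * (U * F - Y * F)) $$ (i,j) = (\<Sum>k<d. w k i * w k j)"
      using that U Y by (simp add: F_def w_def algebra_simps)
    have cross: "(transpose_mat (Y * F) * (U * F)) $$ (i,j) = f i * f j * P $$ (i,j)"
      using that U Y by (simp add: F_def P_def sum_distrib_left algebra_simps)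
    have idem: "w k i * w k j * (f i * f j * P $$ (i,j)) = w k i * P $$ (i,j) * w k j" for k
    proof -
      have "w k i * f i = w k i" "w k j * f j = w k j" using f_idem by (simp_all add: w_def mult.assoc)
      moreover have "w k i * w k j * (f i * f j * P $$ (i,j)) = (w k i * f i) * P $$ (i,j) * (w k j * f j)"
        by (simp only: mult_ac)
      ultimately show ?thesis by (simp only:)
    qed
    show ?thesis unfolding gram cross sum_distrib_right idem ..
  qed
  have "frob_inner (transpose_mat (U * F - Y * F) * (U * F - Y * F)) (transpose_mat (Y * F) * (U * F))
      = (\<Sum>i<r. \<Sum>j<r. \<Sum>k<d. w k i * P $$ (i,j) * w k j)"
    unfolding frob_inner_def using U Y
    by (intro sum.cong) (auto simp: F_def entry[unfolded F_def] simp del: index_mult_mat_sum)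
  also have "\<dots> = (\<Sum>k<d. \<Sum>i<r. \<Sum>j<r. w k i * P $$ (i,j) * w k j)" by (rule sum_rotate3)
  also have "\<dots> \<ge> 0"
  proof (rule sum_nonneg)
    fix k
    have "block_supported r1 r (w k)" unfolding block_supported_def w_def using f_supp by auto
    thus "0 \<le> (\<Sum>i<r. \<Sum>j<r. w k i * P $$ (i,j) * w k j)"
      unfolding P_def by (rule quadratic_form_nonneg)
  qed
  finally show ?thesis .
qed

lemma block_outer_diff_ge:
  assumes U: "U \<in> carrier_mat d r" and Y: "Y \<in> carrier_mat d r"
    and opt: "block_trace_maximizer (transpose_mat Y * U) r r1"
    and Y_lower: "\<And>W. W \<in> carrier_mat r d \<Longrightarrow> s * frob_inner W W \<le> frob_inner (Y * W) (Y * W)"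
    and f_idem: "\<And>i. f i * f i = f i"
    and f_supp: "\<And>i j. f i \<noteq> 0 \<Longrightarrow> f j \<noteq> 0 \<Longrightarrow> (i < r1) = (j < r1)"
  defines "F \<equiv> diag_mat_of r f"
  shows "frob_inner (U * F * transpose_mat (U * F) - Y * F * transpose_mat (Y * F))
                    (U * F * transpose_mat (U * F) - Y * F * transpose_mat (Y * F))
    \<ge> 2 * (sqrt 2 - 1) * s * frob_inner ((U - Y) * F) ((U - Y) * F)"
proof -
  have F: "F \<in> carrier_mat r r" by (simp add: F_def)
  have UF: "U * F \<in> carrier_mat d r" and YF: "Y * F \<in> carrier_mat d r" and DF: "(U - Y) * F \<in> carrier_mat d r"
    using U Y F by auto
  have diff: "U * F - Y * F = (U - Y) * F" using U Y F by (simp add: minus_mult_distrib_mat[of _ d r])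
  have "s * frob_inner ((U - Y) * F) ((U - Y) * F)
      \<le> frob_inner (transpose_mat (U * F - Y * F) * (U * F - Y * F)) (transpose_mat (Y * F) * (Y * F))"
  proof -
    have "F * transpose_mat ((U - Y) * F) = transpose_mat ((U - Y) * F)"
      unfolding F_def by (rule diag_mat_of_idem_mult_transpose[of _ d, OF _ f_idem]) (use U Y in simp)
    hence "Y * F * transpose_mat ((U - Y) * F) = Y * transpose_mat ((U - Y) * F)"
      using assoc_mult_mat[OF Y F, of "transpose_mat ((U - Y) * F)" d] DF by simp
    hence "frob_inner (transpose_mat (U * F - Y * F) * (U * F - Y * F)) (transpose_mat (Y * F) * (Y * F))
        = frob_inner (Y * transpose_mat ((U - Y) * F)) (Y * transpose_mat ((U - Y) * F))"
      unfolding diff frob_inner_inner_gram[OF DF YF] by simp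
    moreover have "frob_inner (transpose_mat ((U - Y) * F)) (transpose_mat ((U - Y) * F))
        = frob_inner ((U - Y) * F) ((U - Y) * F)"
      by (rule frob_inner_transpose[OF DF DF])
    ultimately show ?thesis using Y_lower[of "transpose_mat ((U - Y) * F)"] DF by simp
  qed
  hence "2 * (sqrt 2 - 1) * s * frob_inner ((U - Y) * F) ((U - Y) * F)
      \<le> 2 * (sqrt 2 - 1) * frob_inner (transpose_mat (U * F - Y * F) * (U * F - Y * F)) (transpose_mat (Y * F) * (Y * F))"
    by (subst mult.assoc, intro mult_left_mono) auto
  also have "\<dots> \<le> frob_inner (U * F * transpose_mat (U * F) - Y * F * transpose_mat (Y * F))
                    (U * F * transpose_mat (U * F) - Y * F * transpose_mat (Y * F))"
    by (rule frob_inner_outer_diff_ge[OF UF YF block_cross_gram_symmetric[where f = f, OF U Y opt f_supp, folded F_def]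
          block_cross_gram_nonneg[where f = f, OF U Y opt f_idem f_supp, folded F_def]])
  finally show ?thesis .
qed

lemma Lam_congruence_split:
  assumes Z: "Z \<in> carrier_mat d r" and r1: "r1 \<le> r"
  defines "J1 \<equiv> diag_mat_of r (first_block_ind r1)" and "J2 \<equiv> diag_mat_of r (second_block_ind r1)"
  shows "Z * Lam r r1 * transpose_mat Z = Z * J1 * transpose_mat (Z * J1) - Z * J2 * transpose_mat (Z * J2)"
proof (rule eq_matI)
  fix a b assume "a < dim_row (Z * J1 * transpose_mat (Z * J1) - Z * J2 * transpose_mat (Z * J2))"
    and "b < dim_col (Z * J1 * transpose_mat (Z * J1) - Z * J2 * transpose_mat (Z * J2))"
  hence ab: "a < d" "b < d" using Z by (auto simp: J2_def)
  have "(Z * Lam r r1 * transpose_mat Z) $$ (a,b) = (\<Sum>l<r. Z $$ (a,l) * block_sign r1 l * Z $$ (b,l))"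
    using Z ab r1 by (simp add: Lam_eq_diag_mat_of)
  also have "\<dots> = (\<Sum>l<r. Z $$ (a,l) * first_block_ind r1 l * (Z $$ (b,l) * first_block_ind r1 l)
      - Z $$ (a,l) * second_block_ind r1 l * (Z $$ (b,l) * second_block_ind r1 l))"
    by (intro sum.cong refl) (simp add: block_sign_def first_block_ind_def second_block_ind_def)
  also have "\<dots> = (Z * J1 * transpose_mat (Z * J1) - Z * J2 * transpose_mat (Z * J2)) $$ (a,b)"
    using Z ab by (simp add: J1_def J2_def sum_subtractf)
  finally show "(Z * Lam r r1 * transpose_mat Z) $$ (a,b) = \<dots>" .
qed (use Z r1 in \<open>auto simp: J1_def J2_def\<close>)

lemma frob_inner_block_split:
  fixes r1 :: nat
  assumes A: "A \<in> carrier_mat d r"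
  defines "J1 \<equiv> diag_mat_of r (first_block_ind r1)" and "J2 \<equiv> diag_mat_of r (second_block_ind r1)"
  shows "frob_inner (A * J1) (A * J1) + frob_inner (A * J2) (A * J2) = frob_inner A A"
proof -
  have "frob_inner (A * J1) (A * J1) + frob_inner (A * J2) (A * J2)
      = (\<Sum>i<d. \<Sum>j<r. A $$ (i,j) * first_block_ind r1 j * (A $$ (i,j) * first_block_ind r1 j)
           + A $$ (i,j) * second_block_ind r1 j * (A $$ (i,j) * second_block_ind r1 j))"
    unfolding frob_inner_def using A by (simp add: J1_def J2_def sum.distrib)
  also have "\<dots> = (\<Sum>i<d. \<Sum>j<r. A $$ (i,j) * A $$ (i,j))"
    by (intro sum.cong refl) (simp add: first_block_ind_def second_block_ind_def)
  also have "\<dots> = frob_inner A A" unfolding frob_inner_def using A by simp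
  finally show ?thesis .
qed

lemma index_Lam_conj_diff:
  assumes U: "U \<in> carrier_mat d r" and r1: "r1 \<le> r" and ij: "i < r" "j < r"
  shows "(transpose_mat U * U - Lam r r1 * transpose_mat U * U * Lam r r1) $$ (i,j)
       = (1 - block_sign r1 i * block_sign r1 j) * (transpose_mat U * U) $$ (i,j)"
proof -
  have "Lam r r1 * transpose_mat U * U = Lam r r1 * (transpose_mat U * U)"
    using U r1 by (simp add: assoc_mult_mat[of _ r r _ d _ r])
  thus ?thesis using U r1 ij by (simp add: Lam_eq_diag_mat_of algebra_simps)
qed

lemma frob_inner_Lam_conj_diff:
  assumes U: "U \<in> carrier_mat d r" and r1: "r1 \<le> r"
  defines "M \<equiv> transpose_mat U * U - Lam r r1 * transpose_mat U * U * Lam r r1"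
    and "U1 \<equiv> U * diag_mat_of r (first_block_ind r1)" and "U2 \<equiv> U * diag_mat_of r (second_block_ind r1)"
  shows "frob_inner M M = 8 * frob_inner (U1 * transpose_mat U1) (U2 * transpose_mat U2)"
proof -
  define G where "G = transpose_mat U * U"
  define K where "K = transpose_mat U1 * U2"
  have G: "G \<in> carrier_mat r r" and K: "K \<in> carrier_mat r r"
    using U by (auto simp: G_def K_def U1_def U2_def)
  have M: "M \<in> carrier_mat r r"
    unfolding M_def using U Lam_carrier[OF r1] by (intro minus_carrier_mat mult_carrier_mat) auto
  have Kent: "K $$ (a,b) = first_block_ind r1 a * second_block_ind r1 b * G $$ (a,b)" if "a < r" "b < r" for a b
    using that U by (simp add: K_def U1_def U2_def G_def sum_distrib_left algebra_simps)
  have Gsym: "G $$ (b,a) = G $$ (a,b)" if "a < r" "b < r" for a b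
    using that U by (simp add: G_def mult.commute)
  have Ment: "M $$ (a,b) = (1 - block_sign r1 a * block_sign r1 b) * G $$ (a,b)"
    if ab: "a < r" "b < r" for a b
    unfolding M_def G_def by (rule index_Lam_conj_diff[OF U r1 ab])
  have entry: "M $$ (a,b) * M $$ (a,b) = 4 * (K $$ (a,b) * K $$ (a,b)) + 4 * (K $$ (b,a) * K $$ (b,a))"
    if ab: "a < r" "b < r" for a b
    unfolding Ment[OF ab] Kent[OF ab] Kent[OF ab(2) ab(1)] Gsym[OF ab]
    by (cases "a < r1"; cases "b < r1") (simp_all add: block_sign_def first_block_ind_def second_block_ind_def)
  have "frob_inner M M = 4 * (\<Sum>a<r. \<Sum>b<r. K $$ (a,b) * K $$ (a,b)) + 4 * (\<Sum>a<r. \<Sum>b<r. K $$ (b,a) * K $$ (b,a))"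
    unfolding frob_inner_def using M by (simp add: entry sum.distrib sum_distrib_left)
  also have "(\<Sum>a<r. \<Sum>b<r. K $$ (b,a) * K $$ (b,a)) = (\<Sum>a<r. \<Sum>b<r. K $$ (a,b) * K $$ (a,b))"
    by (rule sum.swap)
  also have "(\<Sum>a<r. \<Sum>b<r. K $$ (a,b) * K $$ (a,b)) = frob_inner K K"
    unfolding frob_inner_def using K by simp
  also have "\<dots> = frob_inner (U1 * transpose_mat U1) (U2 * transpose_mat U2)"
    unfolding K_def by (rule frob_inner_outer_gram[symmetric]) (use U in \<open>auto simp: U1_def U2_def\<close>)
  finally show ?thesis by simp
qed

lemma Lam_conj_diff_eq_cross_terms:
  assumes U: "U \<in> carrier_mat d r" and Y: "Y \<in> carrier_mat d r" and r1: "r1 \<le> r"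
    and H: "block_diagonal r1 (transpose_mat Y * Y)" and ij: "i < r" "j < r"
  defines "S \<equiv> transpose_mat Y * (U - Y)" and "N \<equiv> transpose_mat (U - Y) * (U - Y)"
  shows "(transpose_mat U * U - Lam r r1 * transpose_mat U * U * Lam r r1) $$ (i,j)
       = (1 - block_sign r1 i * block_sign r1 j) * (S $$ (i,j) + S $$ (j,i) + N $$ (i,j))"
proof -
  have "(transpose_mat U * U) $$ (i,j) = (\<Sum>k<d. U $$ (k,i) * U $$ (k,j))" using U ij by simp
  also have "\<dots> = (\<Sum>k<d. Y $$ (k,i) * Y $$ (k,j) + Y $$ (k,i) * (U $$ (k,j) - Y $$ (k,j))
      + Y $$ (k,j) * (U $$ (k,i) - Y $$ (k,i)) + (U $$ (k,i) - Y $$ (k,i)) * (U $$ (k,j) - Y $$ (k,j)))"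
    by (rule sum.cong) (simp_all add: algebra_simps)
  also have "\<dots> = (transpose_mat Y * Y) $$ (i,j) + S $$ (i,j) + S $$ (j,i) + N $$ (i,j)"
    using U Y ij by (simp add: S_def N_def sum.distrib)
  finally have gram: "(transpose_mat U * U) $$ (i,j) = (transpose_mat Y * Y) $$ (i,j) + S $$ (i,j) + S $$ (j,i) + N $$ (i,j)" .
  have "(1 - block_sign r1 i * block_sign r1 j) * (transpose_mat Y * Y) $$ (i,j) = 0"
    using H Y ij by (cases "i < r1"; cases "j < r1") (auto simp: block_diagonal_def block_sign_def)
  thus ?thesis unfolding index_Lam_conj_diff[OF U r1 ij] gram by (simp add: algebra_simps)
qed

lemma frob_inner_descent_ge:
  assumes U: "U \<in> carrier_mat d r" and Y: "Y \<in> carrier_mat d r" and r1: "r1 \<le> r"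
    and H: "block_diagonal r1 (transpose_mat Y * Y)"
  defines "M \<equiv> transpose_mat U * U - Lam r r1 * transpose_mat U * U * Lam r r1"
  shows "frob_inner (U - Y) (U * M) \<ge> (1/8) * (frob_norm M)^2 - (1/2) * (frob_norm (U - Y))^4"
proof -
  define De where "De = U - Y"
  define S where "S = transpose_mat Y * De"
  define N where "N = transpose_mat De * De"
  define m where "m = frob_norm M"
  define p where "p = frob_inner De De"
  have De: "De \<in> carrier_mat d r" using Y by (simp add: De_def)
  have M: "M \<in> carrier_mat r r"
    unfolding M_def using U Lam_carrier[OF r1] by (intro minus_carrier_mat mult_carrier_mat) auto
  have S: "S \<in> carrier_mat r r" and N: "N \<in> carrier_mat r r" using Y De by (auto simp: S_def N_def)
  have Ment: "M $$ (i,j) = (1 - block_sign r1 i * block_sign r1 j) * (S $$ (i,j) + S $$ (j,i) + N $$ (i,j))"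
    if "i < r" "j < r" for i j
    unfolding M_def S_def N_def De_def by (rule Lam_conj_diff_eq_cross_terms[OF U Y r1 H that])
  have Msym: "M $$ (j,i) = M $$ (i,j)" if "i < r" "j < r" for i j
    using that U by (simp add: M_def index_Lam_conj_diff[OF U r1] mult.commute)
  have "transpose_mat U * De = S + N"
  proof (rule eq_matI)
    fix i j assume "i < dim_row (S + N)" "j < dim_col (S + N)"
    hence ij: "i < r" "j < r" using N by auto
    have "(transpose_mat U * De) $$ (i,j) = (\<Sum>k<d. U $$ (k,i) * De $$ (k,j))" using U De ij by simp
    also have "\<dots> = (\<Sum>k<d. Y $$ (k,i) * De $$ (k,j) + De $$ (k,i) * De $$ (k,j))"
      using U Y ij by (intro sum.cong refl) (simp add: De_def algebra_simps)
    also have "\<dots> = (S + N) $$ (i,j)" using Y De ij by (simp add: S_def N_def sum.distrib)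
    finally show "(transpose_mat U * De) $$ (i,j) = (S + N) $$ (i,j)" .
  qed (use U N De in auto)
  hence inner: "frob_inner De (U * M) = frob_inner S M + frob_inner N M"
    using frob_inner_mult_right_transpose_left[OF De U M] frob_inner_add_left[OF M S N] by simp
  have "M $$ (i,j) * M $$ (i,j)
      = 2 * (S $$ (i,j) * M $$ (i,j)) + 2 * (S $$ (j,i) * M $$ (i,j)) + 2 * (N $$ (i,j) * M $$ (i,j))"
    if "i < r" "j < r" for i j
    unfolding Ment[OF that] by (cases "i < r1"; cases "j < r1") (simp_all add: block_sign_def algebra_simps)
  hence "frob_inner M M = 2 * frob_inner S M + 2 * (\<Sum>i<r. \<Sum>j<r. S $$ (j,i) * M $$ (i,j)) + 2 * frob_inner N M"
    unfolding frob_inner_def using M S N by (simp add: sum.distrib sum_distrib_left)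
  also have "(\<Sum>i<r. \<Sum>j<r. S $$ (j,i) * M $$ (i,j)) = frob_inner S M"
    unfolding frob_inner_def using S M Msym by (subst sum.swap) simp
  finally have MM: "m^2 = 4 * frob_inner S M + 2 * frob_inner N M"
    unfolding m_def frob_norm_sq by simp
  have "frob_norm N \<le> p"
  proof -
    have "(frob_norm N)^2 \<le> p^2" unfolding frob_norm_sq N_def p_def by (rule frob_inner_gram_le[OF De])
    thus ?thesis using frob_norm_nonneg[of N] frob_inner_self_nonneg[of De]
      by (simp add: p_def power2_le_iff_abs_le)
  qed
  hence "\<bar>frob_inner N M\<bar> \<le> p * m"
    using frob_inner_abs_le[OF N M] mult_right_mono[OF _ frob_norm_nonneg[of M]] unfolding m_def
    by fastforce
  moreover have "(frob_norm (U - Y))^4 = p^2"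
    unfolding p_def De_def frob_norm_sq[symmetric] by simp
  moreover have "(1/4) * m^2 - (1/2) * (p * m) - ((1/8) * m^2 - (1/2) * p^2) = (1/8) * (m - 2 * p)^2"
    by (simp add: power2_eq_square algebra_simps)
  moreover have "frob_inner De (U * M) = (1/4) * m^2 + (1/2) * frob_inner N M"
    using inner MM by linarith
  ultimately show ?thesis
    using zero_le_power2[of "m - 2 * p"] unfolding m_def[symmetric] De_def[symmetric] by linarith
qed

lemma frob_norm_Lam_conj_diff_ge:
  assumes U: "U \<in> carrier_mat d r" and Y: "Y \<in> carrier_mat d r" and r1: "r1 \<le> r"
    and H: "block_diagonal r1 (transpose_mat Y * Y)"
    and opt: "block_trace_maximizer (transpose_mat Y * U) r r1"
    and Y_lower: "\<And>W. W \<in> carrier_mat r d \<Longrightarrow> s * frob_inner W W \<le> frob_inner (Y * W) (Y * W)"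
  defines "M \<equiv> transpose_mat U * U - Lam r r1 * transpose_mat U * U * Lam r r1"
    and "E \<equiv> U * Lam r r1 * transpose_mat U - Y * Lam r r1 * transpose_mat Y"
  shows "(frob_norm M)^2 \<ge> 8 * (sqrt 2 - 1) * s * (frob_norm (U - Y))^2 - 4 * (frob_norm E)^2"
proof -
  define J1 where "J1 = diag_mat_of r (first_block_ind r1)"
  define J2 where "J2 = diag_mat_of r (second_block_ind r1)"
  define A1 where "A1 = U * J1 * transpose_mat (U * J1)"
  define A2 where "A2 = U * J2 * transpose_mat (U * J2)"
  define B1 where "B1 = Y * J1 * transpose_mat (Y * J1)"
  define B2 where "B2 = Y * J2 * transpose_mat (Y * J2)"
  define c where "c = (sqrt 2 - 1) * s"
  have UJ1: "U * J1 \<in> carrier_mat d r" and UJ2: "U * J2 \<in> carrier_mat d r"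
    and YJ1: "Y * J1 \<in> carrier_mat d r" and YJ2: "Y * J2 \<in> carrier_mat d r"
    using U Y by (auto simp: J1_def J2_def)
  have A1: "A1 \<in> carrier_mat d d" and A2: "A2 \<in> carrier_mat d d"
    and B1: "B1 \<in> carrier_mat d d" and B2: "B2 \<in> carrier_mat d d"
    using UJ1 UJ2 YJ1 YJ2 by (auto simp: A1_def A2_def B1_def B2_def)
  have "E = (A1 - A2) - (B1 - B2)"
    unfolding E_def Lam_congruence_split[OF U r1] Lam_congruence_split[OF Y r1]
    by (simp add: A1_def A2_def B1_def B2_def J1_def J2_def)
  also have "\<dots> = (A1 - B1) - (A2 - B2)" using A1 A2 B1 B2 by (intro eq_matI) auto
  finally have E_split: "E = (A1 - B1) - (A2 - B2)" .
  have "frob_inner E E = frob_inner (A1 - B1) (A1 - B1) + frob_inner (A2 - B2) (A2 - B2)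
      - 2 * (frob_inner A1 A2 - frob_inner A1 B2 - frob_inner B1 A2 + frob_inner B1 B2)"
  proof -
    have P: "A1 - B1 \<in> carrier_mat d d" and Q: "A2 - B2 \<in> carrier_mat d d" using A1 A2 B1 B2 by auto
    have "frob_inner (A1 - B1) (A2 - B2) = frob_inner A1 A2 - frob_inner A1 B2 - frob_inner B1 A2 + frob_inner B1 B2"
      using frob_inner_diff_left[OF Q A1 B1] frob_inner_diff_right[OF A1 A2 B2] frob_inner_diff_right[OF B1 A2 B2]
      by simp
    thus ?thesis unfolding E_split
      using frob_inner_diff_left[of "(A1 - B1) - (A2 - B2)" d d, OF _ P Q] frob_inner_diff_right[OF P P Q]
        frob_inner_diff_right[OF Q P Q] frob_inner_commute[OF Q P] P Q
      by simp
  qed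
  moreover have "frob_inner A1 B2 \<ge> 0" "frob_inner B1 A2 \<ge> 0"
    unfolding A1_def A2_def B1_def B2_def frob_inner_outer_gram[OF UJ1 YJ2] frob_inner_outer_gram[OF YJ1 UJ2]
    by (rule frob_inner_self_nonneg)+
  moreover have "frob_inner B1 B2 = 0"
    unfolding B1_def B2_def frob_inner_outer_gram[OF YJ1 YJ2]
  proof (rule frob_inner_self_eq_0)
    fix a b assume "a < dim_row (transpose_mat (Y * J1) * (Y * J2))" "b < dim_col (transpose_mat (Y * J1) * (Y * J2))"
    hence ab: "a < r" "b < r" using YJ1 YJ2 by auto
    have "(transpose_mat (Y * J1) * (Y * J2)) $$ (a,b)
        = first_block_ind r1 a * second_block_ind r1 b * (transpose_mat Y * Y) $$ (a,b)"
      using ab Y by (simp add: J1_def J2_def sum_distrib_left algebra_simps)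
    also have "\<dots> = 0" using H ab Y
      by (cases "a < r1"; cases "b < r1") (auto simp: first_block_ind_def second_block_ind_def block_diagonal_def)
    finally show "(transpose_mat (Y * J1) * (Y * J2)) $$ (a,b) = 0" .
  qed
  moreover have "frob_inner M M = 8 * frob_inner A1 A2"
    unfolding M_def A1_def A2_def J1_def J2_def by (rule frob_inner_Lam_conj_diff[OF U r1])
  moreover have "frob_inner (A1 - B1) (A1 - B1) \<ge> 2 * c * frob_inner ((U - Y) * J1) ((U - Y) * J1)"
    unfolding A1_def B1_def J1_def c_def mult.assoc[symmetric]
    by (rule block_outer_diff_ge[OF U Y opt Y_lower]) (auto simp: first_block_ind_def split: if_splits)
  moreover have "frob_inner (A2 - B2) (A2 - B2) \<ge> 2 * c * frob_inner ((U - Y) * J2) ((U - Y) * J2)"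
    unfolding A2_def B2_def J2_def c_def mult.assoc[symmetric]
    by (rule block_outer_diff_ge[OF U Y opt Y_lower]) (auto simp: second_block_ind_def split: if_splits)
  moreover have split: "frob_inner ((U - Y) * J1) ((U - Y) * J1) + frob_inner ((U - Y) * J2) ((U - Y) * J2)
      = frob_inner (U - Y) (U - Y)"
    unfolding J1_def J2_def by (rule frob_inner_block_split[of "U - Y" d r]) (use Y in simp)
  moreover have "c * frob_inner ((U - Y) * J1) ((U - Y) * J1) + c * frob_inner ((U - Y) * J2) ((U - Y) * J2)
      = c * frob_inner (U - Y) (U - Y)"
    unfolding split[symmetric] by (simp add: distrib_left)
  ultimately have "frob_inner M M \<ge> 8 * c * frob_inner (U - Y) (U - Y) - 4 * frob_inner E E"
    by (simp only: mult.assoc) argo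
  thus ?thesis unfolding frob_norm_sq c_def by (simp only: mult.assoc)
qed

lemma Qblock_argmin_trace_maximizer:
  assumes Us: "Us \<in> carrier_mat d r" and U: "U \<in> carrier_mat d r" and r1: "r1 \<le> r"
    and Q: "Q \<in> Qblock r r1" and Qmin: "frob_norm (U - Us * Q) = Pi_dist r1 U Us"
  shows "block_trace_maximizer (transpose_mat (Us * Q) * U) r r1"
proof
  define Y where "Y = Us * Q"
  have Qc: "Q \<in> carrier_mat r r" using QblockD[OF r1 Q] by simp
  have Y: "Y \<in> carrier_mat d r" using Us Qc by (simp add: Y_def)
  show "transpose_mat (Us * Q) * U \<in> carrier_mat r r" using Y U by (simp add: Y_def[symmetric])
  show "r1 \<le> r" by (rule r1)
  fix R assume R: "R \<in> Qblock r r1"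
  have Rc: "R \<in> carrier_mat r r" using QblockD[OF r1 R] by simp
  have bdd: "bdd_below ((\<lambda>Q. frob_norm (U - Us * Q)) ` Qblock (dim_col Us) r1)"
    by (rule bdd_belowI[of _ 0]) (auto simp: frob_norm_nonneg)
  have "frob_norm (U - Y) \<le> frob_norm (U - Us * (Q * R))"
    unfolding Y_def Qmin Pi_dist_def using Us Qblock_mult_closed[OF r1 Q R] by (auto intro!: cINF_lower[OF bdd])
  also have "Us * (Q * R) = Y * R" unfolding Y_def using Us Qc Rc by (simp add: assoc_mult_mat[of _ d r _ r _ r])
  finally have "(frob_norm (U - Y))^2 \<le> (frob_norm (U - Y * R))^2"
    by (rule power_mono) (simp add: frob_norm_nonneg)
  moreover have "U - Y = U - Y * 1\<^sub>m r" using Y by simp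
  ultimately have "frob_inner U U - 2 * frob_inner (transpose_mat Y * U) (1\<^sub>m r) + frob_inner Y Y
      \<le> frob_inner U U - 2 * frob_inner (transpose_mat Y * U) R + frob_inner Y Y"
    unfolding frob_norm_sq
    using frob_inner_diff_mult_orthogonal[OF U Y Rc Qblock_mult_transpose[OF r1 R]]
      frob_inner_diff_mult_orthogonal[OF U Y one_carrier_mat] by simp
  thus "frob_inner (transpose_mat (Us * Q) * U) R \<le> frob_inner (transpose_mat (Us * Q) * U) (1\<^sub>m r)"
    by (simp add: Y_def)
qed

lemma gram_orthogonal_mult_Qblock:
  assumes Us: "Us \<in> carrier_mat d r" and orth: "orthogonal_mat Us" and r1: "r1 \<le> r"
    and Q: "Q \<in> Qblock r r1"
  shows "block_diagonal r1 (transpose_mat (Us * Q) * (Us * Q))"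
proof -
  define D where "D = transpose_mat Us * Us"
  have Qc: "Q \<in> carrier_mat r r" and bQ: "block_diagonal r1 Q" using QblockD[OF r1 Q] by auto
  have D: "D \<in> carrier_mat r r" using Us by (simp add: D_def)
  have "transpose_mat (Us * Q) * (Us * Q) = transpose_mat Q * (D * Q)"
    unfolding D_def using Us Qc
    by (simp add: transpose_mult assoc_mult_mat[of _ r d _ d _ r] assoc_mult_mat[of _ r r _ d _ r])
  moreover have "block_diagonal r1 D"
    using orth unfolding orthogonal_mat_def Let_def diagonal_mat_def block_diagonal_def D_def by auto
  ultimately show ?thesis
    using Qc D bQ block_diagonal_transpose[OF bQ]
    by (metis block_diagonal_mult mult_carrier_mat transpose_carrier_mat)
qed

lemma frob_inner_orthogonal_mult_Qblock_ge:
  assumes Us: "Us \<in> carrier_mat d r" and orth: "orthogonal_mat Us" and r1: "r1 \<le> r"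
    and Q: "Q \<in> Qblock r r1" and W: "W \<in> carrier_mat r m"
  shows "(smallest_singular_value Us)^2 * frob_inner W W \<le> frob_inner (Us * Q * W) (Us * Q * W)"
proof -
  have Qc: "Q \<in> carrier_mat r r" and QQ: "transpose_mat Q * Q = 1\<^sub>m r" using QblockD[OF r1 Q] by auto
  have "Us * Q * W = Us * (Q * W)" using Us Qc W by (simp add: assoc_mult_mat[of _ d r _ r _ m])
  thus ?thesis
    using frob_inner_mult_ge_smallest_singular_value[OF Us orth, of "Q * W" m] Qc W
      frob_inner_mult_orthogonal[OF Qc QQ W] by simp
qed

lemma Lam_congruence_mult_Qblock:
  assumes Us: "Us \<in> carrier_mat d r" and r1: "r1 \<le> r" and Q: "Q \<in> Qblock r r1"
  shows "Us * Q * Lam r r1 * transpose_mat (Us * Q) = Us * Lam r r1 * transpose_mat Us"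
proof -
  define L where "L = Lam r r1"
  have Qc: "Q \<in> carrier_mat r r" and bQ: "block_diagonal r1 Q" using QblockD[OF r1 Q] by auto
  have L: "L \<in> carrier_mat r r" using r1 by (simp add: L_def)
  have QL: "Q * L = L * Q"
    unfolding L_def Lam_eq_diag_mat_of[OF r1]
    by (rule block_diagonal_commute_diag_mat_of[OF Qc bQ, symmetric]) (simp add: block_sign_def)
  have "Us * Q * L * transpose_mat (Us * Q) = Us * ((Q * L) * transpose_mat Q) * transpose_mat Us"
    using Us Qc L by (simp add: transpose_mult assoc_mult_mat[of _ d r _ r _ d] assoc_mult_mat[of _ d r _ r _ r]
        assoc_mult_mat[of _ r r _ r _ r] assoc_mult_mat[of _ r r _ r _ d])
  also have "(Q * L) * transpose_mat Q = L * (Q * transpose_mat Q)"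
    unfolding QL using Qc L by (simp add: assoc_mult_mat[of _ r r _ r _ r])
  also have "\<dots> = L" using Qblock_mult_transpose[OF r1 Q] L by simp
  finally show ?thesis by (simp add: L_def)
qed

theorem lemmaE:
  fixes Us U Q :: "real mat" and d r r1 :: nat
  assumes Us: "Us \<in> carrier_mat d r" and orth: "orthogonal_mat Us"
    and U: "U \<in> carrier_mat d r"
    and r1: "r1 \<le> r"
    and Q: "Q \<in> Qblock r r1"
    and Qmin: "frob_norm (U - Us * Q) = Pi_dist r1 U Us"
  defines "\<sigma> \<equiv> smallest_singular_value Us"
    and "M \<equiv> transpose_mat U * U - (Lam r r1) * transpose_mat U * U * (Lam r r1)"
    and "Pd \<equiv> Pi_dist r1 U Us"
    and "E \<equiv> U * (Lam r r1) * transpose_mat U - Us * (Lam r r1) * transpose_mat Us"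
  shows "frob_inner (U - Us * Q) (U * M) \<ge> (1/8) * (frob_norm M)^2 - (1/2) * Pd^4 \<and>
         (frob_norm M)^2 \<ge> 8 * (sqrt 2 - 1) * \<sigma>^2 * Pd^2 - 4 * (frob_norm E)^2 \<and>
         frob_inner (U - Us * Q) (U * M) \<ge>
           (sqrt 2 - 1) * \<sigma>^2 * Pd^2 - (1/2) * (frob_norm E)^2 - (1/2) * Pd^4"
proof -
  define Y where "Y = Us * Q"
  have Y: "Y \<in> carrier_mat d r" using Us QblockD[OF r1 Q] by (simp add: Y_def)
  have Pd: "Pd = frob_norm (U - Y)" using Qmin by (simp add: Pd_def Y_def)
  have H: "block_diagonal r1 (transpose_mat Y * Y)"
    unfolding Y_def by (rule gram_orthogonal_mult_Qblock[OF Us orth r1 Q])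
  have opt: "block_trace_maximizer (transpose_mat Y * U) r r1"
    unfolding Y_def by (rule Qblock_argmin_trace_maximizer[OF Us U r1 Q Qmin])
  have Y_lower: "\<sigma>^2 * frob_inner W W \<le> frob_inner (Y * W) (Y * W)" if "W \<in> carrier_mat r d" for W
    unfolding Y_def \<sigma>_def by (rule frob_inner_orthogonal_mult_Qblock_ge[OF Us orth r1 Q that])
  have "E = U * Lam r r1 * transpose_mat U - Y * Lam r r1 * transpose_mat Y"
    unfolding E_def Y_def Lam_congruence_mult_Qblock[OF Us r1 Q] ..
  hence second: "(frob_norm M)^2 \<ge> 8 * (sqrt 2 - 1) * \<sigma>^2 * Pd^2 - 4 * (frob_norm E)^2"
    using frob_norm_Lam_conj_diff_ge[OF U Y r1 H opt Y_lower] by (simp add: M_def Pd)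
  have first: "frob_inner (U - Us * Q) (U * M) \<ge> (1/8) * (frob_norm M)^2 - (1/2) * Pd^4"
    using frob_inner_descent_ge[OF U Y r1 H] by (simp add: M_def Pd Y_def)
  from first second show ?thesis by (simp only: mult.assoc) argo
qed

end
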